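(* There exists an $\widetilde{O}(\sqrt{n}+D)$-round randomized $\mathsf{CONGEST}$ algorithm that lets each vertex $v_i$ of $P$ learn its index $i$, the distance from $s$ to $v_i$, and the distance from $v_i$ to $t$, with high probability.
   Context: $G=(V,E)$ is a directed graph with $n=|V|$ whose edges are either unweighted or carry positive integer weights bounded by a polynomial in $n$. $G$ is the communication network (communication over edges in both directions); $D$ is the diameter of the underlying undirected unweighted graph. $\mathsf{CONGEST}$: synchronous rounds, each vertex may send an $O(\log n)$-bit message to each neighbour per round, unique $O(\log n)$-bit identifiers, unlimited local computation. "With high probability" means with probability $1-1/\operatorname{poly}(n)$. $P=(s=v_0,v_1,\dots,v_{h_{st}}=t)$ is a given shortest $s$-$t$ path. Initially the only knowledge about $P$ is: both endpoints of each edge of $P$ know that the edge belongs to $P$, $s$ knows it is the source and $t$ knows it is the target. *)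

theory Defs
  imports Complex_Main
begin

text \<open>Vertices are the naturals 0..n-1. A (weighted) directed graph is given by
  w :: nat => nat => nat option, where w u v = Some k means a directed edge (u,v)
  of positive integer weight k. Unweighted graphs are the case of all weights 1.\<close>

definition adj :: "(nat \<Rightarrow> nat \<Rightarrow> nat option) \<Rightarrow> nat \<Rightarrow> nat \<Rightarrow> bool" where
  "adj w u v \<longleftrightarrow> w u v \<noteq> None \<or> w v u \<noteq> None"

definition is_walk :: "(nat \<Rightarrow> nat \<Rightarrow> nat option) \<Rightarrow> nat list \<Rightarrow> bool" where
  "is_walk w xs \<longleftrightarrow> xs \<noteq> [] \<and> (\<forall>i. Suc i < length xs \<longrightarrow> w (xs ! i) (xs ! Suc i) \<noteq> None)"

definition walk_weight :: "(nat \<Rightarrow> nat \<Rightarrow> nat option) \<Rightarrow> nat list \<Rightarrow> nat" where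
  "walk_weight w xs = (\<Sum>i<length xs - 1. the (w (xs ! i) (xs ! Suc i)))"

definition dist :: "(nat \<Rightarrow> nat \<Rightarrow> nat option) \<Rightarrow> nat \<Rightarrow> nat \<Rightarrow> nat" where
  "dist w u v = (LEAST d. \<exists>xs. is_walk w xs \<and> hd xs = u \<and> last xs = v \<and> walk_weight w xs = d)"

definition is_uwalk :: "(nat \<Rightarrow> nat \<Rightarrow> nat option) \<Rightarrow> nat list \<Rightarrow> bool" where
  "is_uwalk w xs \<longleftrightarrow> xs \<noteq> [] \<and> (\<forall>i. Suc i < length xs \<longrightarrow> adj w (xs ! i) (xs ! Suc i))"

definition hop :: "(nat \<Rightarrow> nat \<Rightarrow> nat option) \<Rightarrow> nat \<Rightarrow> nat \<Rightarrow> nat" where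
  "hop w u v = (LEAST k. \<exists>xs. is_uwalk w xs \<and> hd xs = u \<and> last xs = v \<and> length xs = Suc k)"

definition diam :: "nat \<Rightarrow> (nat \<Rightarrow> nat \<Rightarrow> nat option) \<Rightarrow> nat" where
  "diam n w = Max {hop w u v | u v. u < n \<and> v < n}"

definition path_edges :: "nat list \<Rightarrow> (nat \<times> nat) set" where
  "path_edges ps = {(ps ! i, ps ! Suc i) | i. Suc i < length ps}"

text \<open>A valid instance: n vertices, edge weights in [1, n^W], identifiers injective and
  below n^I (i.e. O(log n) bits), connected communication graph, and ps a shortest
  s-t path (s = hd ps, t = last ps).\<close>
definition valid_instance ::
  "nat \<Rightarrow> nat \<Rightarrow> nat \<Rightarrow> (nat \<Rightarrow> nat \<Rightarrow> nat option) \<Rightarrow> (nat \<Rightarrow> nat) \<Rightarrow> nat list \<Rightarrow> bool" where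
  "valid_instance n W I w ident ps \<longleftrightarrow>
     (\<forall>u v k. w u v = Some k \<longrightarrow> u < n \<and> v < n \<and> u \<noteq> v \<and> 1 \<le> k \<and> k \<le> n ^ W) \<and>
     inj_on ident {..<n} \<and> (\<forall>v<n. ident v < n ^ I) \<and>
     (\<forall>u<n. \<forall>v<n. \<exists>xs. is_uwalk w xs \<and> hd xs = u \<and> last xs = v) \<and>
     is_walk w ps \<and> distinct ps \<and> set ps \<subseteq> {..<n} \<and>
     walk_weight w ps = dist w (hd ps) (last ps)"

record nbr_info =
  nb_id :: nat
  nb_wout :: "nat option"   \<comment> \<open>weight of edge to this neighbour, if any\<close>
  nb_win :: "nat option"    \<comment> \<open>weight of edge from this neighbour, if any\<close>
  nb_pout :: bool           \<comment> \<open>edge to this neighbour belongs to P\<close>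
  nb_pin :: bool            \<comment> \<open>edge from this neighbour belongs to P\<close>

record local_input =
  li_n :: nat
  li_id :: nat
  li_nbrs :: "nbr_info set"
  li_src :: bool
  li_tgt :: bool
  li_rand :: "bool list"

type_synonym inbox = "nat \<Rightarrow> nat option"  \<comment> \<open>sender identifier to received message\<close>

text \<open>An algorithm: given the local input and the history of received messages
  (one inbox per completed round), the message (a number, i.e. a bit string) sent to the
  neighbour with a given identifier, and the output (None = not yet terminated;
  Some (i, d(s,v), d(v,t)) = terminated with this output). Unlimited local computation
  is modelled by arbitrary HOL functions.\<close>
record algorithm =
  al_send :: "local_input \<Rightarrow> inbox list \<Rightarrow> nat \<Rightarrow> nat option"
  al_out :: "local_input \<Rightarrow> inbox list \<Rightarrow> (nat \<times> nat \<times> nat) option"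
  al_rbits :: "nat \<Rightarrow> nat"   \<comment> \<open>number of random bits per vertex, as function of n\<close>

definition local_in ::
  "nat \<Rightarrow> (nat \<Rightarrow> nat \<Rightarrow> nat option) \<Rightarrow> (nat \<Rightarrow> nat) \<Rightarrow> nat list \<Rightarrow> (nat \<Rightarrow> bool list) \<Rightarrow> nat \<Rightarrow> local_input" where
  "local_in n w ident ps \<rho> v =
     \<lparr> li_n = n, li_id = ident v,
       li_nbrs = {\<lparr> nb_id = ident u, nb_wout = w v u, nb_win = w u v,
                    nb_pout = ((v, u) \<in> path_edges ps), nb_pin = ((u, v) \<in> path_edges ps) \<rparr>
                  | u. u < n \<and> adj w u v},
       li_src = (v = hd ps), li_tgt = (v = last ps), li_rand = \<rho> v \<rparr>"

text \<open>Synchronous execution: hist r v is the list of inboxes of v after r rounds.\<close>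
primrec hist ::
  "algorithm \<Rightarrow> nat \<Rightarrow> (nat \<Rightarrow> nat \<Rightarrow> nat option) \<Rightarrow> (nat \<Rightarrow> nat) \<Rightarrow> nat list \<Rightarrow> (nat \<Rightarrow> bool list)
   \<Rightarrow> nat \<Rightarrow> nat \<Rightarrow> inbox list" where
  "hist A n w ident ps \<rho> 0 = (\<lambda>v. [])"
| "hist A n w ident ps \<rho> (Suc r) =
     (\<lambda>v. hist A n w ident ps \<rho> r v @
        [\<lambda>j. if \<exists>u<n. adj w u v \<and> ident u = j
             then (let u = (THE u. u < n \<and> adj w u v \<and> ident u = j)
                   in al_send A (local_in n w ident ps \<rho> u) (hist A n w ident ps \<rho> r u) (ident v))
             else None])"

definition out_at ::
  "algorithm \<Rightarrow> nat \<Rightarrow> (nat \<Rightarrow> nat \<Rightarrow> nat option) \<Rightarrow> (nat \<Rightarrow> nat) \<Rightarrow> nat list \<Rightarrow> (nat \<Rightarrow> bool list)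
   \<Rightarrow> nat \<Rightarrow> nat \<Rightarrow> (nat \<times> nat \<times> nat) option" where
  "out_at A n w ident ps \<rho> r v = al_out A (local_in n w ident ps \<rho> v) (hist A n w ident ps \<rho> r v)"

definition succeeds ::
  "algorithm \<Rightarrow> nat \<Rightarrow> (nat \<Rightarrow> nat \<Rightarrow> nat option) \<Rightarrow> (nat \<Rightarrow> nat) \<Rightarrow> nat list \<Rightarrow> (nat \<Rightarrow> bool list)
   \<Rightarrow> nat \<Rightarrow> bool" where
  "succeeds A n w ident ps \<rho> T \<longleftrightarrow>
     (\<forall>v<n. \<exists>r\<le>T. out_at A n w ident ps \<rho> r v \<noteq> None) \<and>
     (\<forall>i<length ps.
        out_at A n w ident ps \<rho> (LEAST r. out_at A n w ident ps \<rho> r (ps ! i) \<noteq> None) (ps ! i)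
        = Some (i, dist w (hd ps) (ps ! i), dist w (ps ! i) (last ps)))"

text \<open>Random strings: each vertex v < n gets L uniformly random bits, independently.\<close>
definition rand_space :: "nat \<Rightarrow> nat \<Rightarrow> (nat \<Rightarrow> bool list) set" where
  "rand_space n L = {\<rho>. \<forall>v. length (\<rho> v) = (if v < n then L else 0)}"

definition success_prob ::
  "algorithm \<Rightarrow> nat \<Rightarrow> (nat \<Rightarrow> nat \<Rightarrow> nat option) \<Rightarrow> (nat \<Rightarrow> nat) \<Rightarrow> nat list \<Rightarrow> nat \<Rightarrow> real" where
  "success_prob A n w ident ps T =
     real (card {\<rho> \<in> rand_space n (al_rbits A n). succeeds A n w ident ps \<rho> T})
     / real (card (rand_space n (al_rbits A n)))"

text \<open>Messages have O(log n) bits: every message is a number below max 2 n ^ B.\<close>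
definition congest_bounded :: "algorithm \<Rightarrow> nat \<Rightarrow> bool" where
  "congest_bounded A B \<longleftrightarrow>
     (\<forall>inp H j m. al_send A inp H j = Some m \<longrightarrow> m < (max 2 (li_n inp)) ^ B)"

end

theory Submission
  imports Defs "HOL-Library.Log_Nat" "HOL-Library.FuncSet"
begin

(* Every vertex of P other than s becomes a marker when all its q random bits are set, where
   q is about (log n)/2, so markers are about sqrt n apart; s is always a marker. In a first
   phase of L = 2^q (c + 2) log n rounds, counters travel along P: each vertex learns the
   identifier of the last marker before it and its hop and weight distance from it. If no L
   consecutive path vertices lack a marker, every marker and t then holds an item recording
   its predecessor marker and its offset from it. In a second phase these O(sqrt n + log n)
   items are broadcast by pipelined flooding, which delivers all k items to every vertex
   within D + k rounds. Each path vertex then chains the items back to s and forward to t;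
   the prefix weights it computes are distances because subpaths of shortest paths are
   shortest. A long unmarked stretch and too many markers each have probability at most
   n^-c / 2. *)

section \<open>Walks and shortest paths\<close>

lemma walk_weight_Cons: "walk_weight w (x # y # zs) = the (w x y) + walk_weight w (y # zs)"
  unfolding walk_weight_def by (simp add: sum.lessThan_Suc_shift del: sum.lessThan_Suc)

lemma walk_weight_single: "walk_weight w [x] = 0"
  by (simp add: walk_weight_def)

lemma is_walk_Cons: "is_walk w (x # y # zs) \<longleftrightarrow> w x y \<noteq> None \<and> is_walk w (y # zs)"
  unfolding is_walk_def by (auto simp: All_less_Suc2)

lemma walk_append:
  "is_walk w xs \<Longrightarrow> is_walk w ys \<Longrightarrow> last xs = hd ys \<Longrightarrow>
   is_walk w (xs @ tl ys) \<and> walk_weight w (xs @ tl ys) = walk_weight w xs + walk_weight w ys"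
proof (induction xs rule: induct_list012)
  case 1 then show ?case by (simp add: is_walk_def)
next
  case (2 x) then show ?case by (cases ys) (auto simp: walk_weight_single is_walk_def)
next
  case (3 x y zs) then show ?case by (auto simp: is_walk_Cons walk_weight_Cons)
qed

lemma is_walk_take: "is_walk w xs \<Longrightarrow> 0 < k \<Longrightarrow> is_walk w (take k xs)"
  unfolding is_walk_def by auto

lemma is_walk_drop: "is_walk w xs \<Longrightarrow> k < length xs \<Longrightarrow> is_walk w (drop k xs)"
  unfolding is_walk_def by auto

lemma dist_le_walk_weight: "is_walk w xs \<Longrightarrow> dist w (hd xs) (last xs) \<le> walk_weight w xs"
  unfolding dist_def by (rule Least_le) blast

lemma dist_attained:
  "is_walk w xs \<Longrightarrow> \<exists>ys. is_walk w ys \<and> hd ys = hd xs \<and> last ys = last xs \<and>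
     walk_weight w ys = dist w (hd xs) (last xs)"
  unfolding dist_def by (rule LeastI_ex) blast

lemma hd_last_append_tl:
  "xs \<noteq> [] \<Longrightarrow> ys \<noteq> [] \<Longrightarrow> last xs = hd ys \<Longrightarrow>
   hd (xs @ tl ys) = hd xs \<and> last (xs @ tl ys) = last ys"
  by (cases ys) (auto simp: last_append)

lemma take_append_tl_drop: "i < length xs \<Longrightarrow> take (Suc i) xs @ tl (drop i xs) = xs"
  by (metis append_take_drop_id Cons_nth_drop_Suc list.sel(3))

lemma length_le_if_distinct: "distinct ps \<Longrightarrow> set ps \<subseteq> {..<n} \<Longrightarrow> length ps \<le> n"
  by (metis card_lessThan card_mono distinct_card finite_lessThan)

lemma shortest_walk_split_dist:
  assumes walk: "is_walk w ps" and shortest: "walk_weight w ps = dist w (hd ps) (last ps)"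
    and i: "i < length ps"
  shows "dist w (hd ps) (ps ! i) = walk_weight w (take (Suc i) ps)"
    and "dist w (ps ! i) (last ps) = walk_weight w (drop i ps)"
proof -
  define pre suf where "pre = take (Suc i) ps" and "suf = drop i ps"
  have walks: "is_walk w pre" "is_walk w suf"
    unfolding pre_def suf_def using walk i by (auto intro: is_walk_take is_walk_drop)
  have ne: "pre \<noteq> []" "suf \<noteq> []"
    using i unfolding pre_def suf_def by auto
  have ends: "hd pre = hd ps" "last pre = ps ! i" "hd suf = ps ! i" "last suf = last ps"
    using i unfolding pre_def suf_def
    by (cases ps, simp_all add: hd_drop_conv_nth take_Suc_conv_app_nth)+
  have split: "walk_weight w ps = walk_weight w pre + walk_weight w suf"
    using walk_append[OF walks] ends take_append_tl_drop[OF i] by (simp add: pre_def suf_def)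
  obtain ys where ys: "is_walk w ys" "hd ys = hd ps" "last ys = ps ! i"
    "walk_weight w ys = dist w (hd ps) (ps ! i)"
    using dist_attained[OF walks(1)] ends by auto
  obtain zs where zs: "is_walk w zs" "hd zs = ps ! i" "last zs = last ps"
    "walk_weight w zs = dist w (ps ! i) (last ps)"
    using dist_attained[OF walks(2)] ends by auto
  have "ys \<noteq> []" "zs \<noteq> []"
    using ys(1) zs(1) by (auto simp: is_walk_def)
  \<comment> \<open>Replacing either part of the shortest walk by a shortest walk cannot make it shorter.\<close>
  have "walk_weight w ps \<le> dist w (hd ps) (ps ! i) + walk_weight w suf"
    using shortest dist_le_walk_weight[of w "ys @ tl suf"] walk_append[OF ys(1) walks(2)]
      hd_last_append_tl[of ys suf] \<open>ys \<noteq> []\<close> ne ys ends by simp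
  moreover have "walk_weight w ps \<le> walk_weight w pre + dist w (ps ! i) (last ps)"
    using shortest dist_le_walk_weight[of w "pre @ tl zs"] walk_append[OF walks(1) zs(1)]
      hd_last_append_tl[of pre zs] \<open>zs \<noteq> []\<close> ne zs ends by simp
  moreover have "dist w (hd ps) (ps ! i) \<le> walk_weight w pre"
    using dist_le_walk_weight[OF walks(1)] ends by simp
  moreover have "dist w (ps ! i) (last ps) \<le> walk_weight w suf"
    using dist_le_walk_weight[OF walks(2)] ends by simp
  ultimately show "dist w (hd ps) (ps ! i) = walk_weight w (take (Suc i) ps)"
    and "dist w (ps ! i) (last ps) = walk_weight w (drop i ps)"
    using split unfolding pre_def suf_def by linarith+
qed

lemma hop_le_diam: "u < n \<Longrightarrow> v < n \<Longrightarrow> hop w u v \<le> diam n w"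
proof -
  assume "u < n" "v < n"
  have "{hop w u v | u v. u < n \<and> v < n} = (\<lambda>(u, v). hop w u v) ` ({..<n} \<times> {..<n})"
    by auto
  then show ?thesis unfolding diam_def using \<open>u < n\<close> \<open>v < n\<close> by (intro Max_ge) auto
qed

lemma hop_attained:
  "is_uwalk w xs \<Longrightarrow> hd xs = u \<Longrightarrow> last xs = v \<Longrightarrow>
   \<exists>ys. is_uwalk w ys \<and> hd ys = u \<and> last ys = v \<and> length ys = Suc (hop w u v)"
  unfolding hop_def by (rule LeastI_ex) (auto intro!: exI[of _ "length xs - 1"] simp: is_uwalk_def)

section \<open>Pipelined flooding\<close>

locale pipelined_flooding =
  fixes V :: "nat set" and link :: "nat \<Rightarrow> nat \<Rightarrow> bool"
    and knows sent :: "nat \<Rightarrow> nat \<Rightarrow> nat set" and msg :: "nat \<Rightarrow> nat \<Rightarrow> nat option"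
    and Items :: "nat set"
  assumes finite_Items: "finite Items"
  and knows_subset: "u \<in> V \<Longrightarrow> knows t u \<subseteq> Items"
  and sent_0: "u \<in> V \<Longrightarrow> sent 0 u = {}"
  and msg_eq: "u \<in> V \<Longrightarrow>
    msg t u = (if knows t u - sent t u = {} then None else Some (Min (knows t u - sent t u)))"
  and sent_Suc: "u \<in> V \<Longrightarrow> sent (Suc t) u = sent t u \<union> set_option (msg t u)"
  and knows_Suc: "u \<in> V \<Longrightarrow>
    knows t u \<union> {x. \<exists>v\<in>V. link v u \<and> msg t v = Some x} \<subseteq> knows (Suc t) u"
begin

fun reach :: "nat \<Rightarrow> nat \<Rightarrow> nat set" where
  "reach x 0 = {u \<in> V. x \<in> knows 0 u}"
| "reach x (Suc d) = reach x d \<union> {u \<in> V. \<exists>v \<in> reach x d. link v u}"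

lemma reach_subset: "reach x d \<subseteq> V"
  by (induction d) auto

lemma reach_mono: "d \<le> d' \<Longrightarrow> reach x d \<subseteq> reach x d'"
  by (induction d' rule: dec_induct) auto

lemma finite_knows: "u \<in> V \<Longrightarrow> finite (knows t u)"
  using knows_subset finite_Items finite_subset by blast

lemma knows_mono: "t \<le> t' \<Longrightarrow> u \<in> V \<Longrightarrow> knows t u \<subseteq> knows t' u"
  by (induction t' rule: dec_induct) (use knows_Suc in blast)+

lemma msg_in_knows: "u \<in> V \<Longrightarrow> msg t u = Some x \<Longrightarrow> x \<in> knows t u - sent t u"
  using msg_eq[of u t] Min_in[of "knows t u - sent t u"] finite_knows[of u t]
  by (auto split: if_splits)

lemma sent_subset_knows: "u \<in> V \<Longrightarrow> sent t u \<subseteq> knows t u"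
proof (induction t)
  case 0 then show ?case using sent_0 by auto
next
  case (Suc t)
  then show ?case
    using msg_in_knows[of u t] sent_Suc[of u t] knows_mono[of t "Suc t" u] by fastforce
qed

lemma finite_sent: "u \<in> V \<Longrightarrow> finite (sent t u)"
  using sent_subset_knows finite_knows finite_subset by blast

lemma sent_subset_knows_link: "v \<in> V \<Longrightarrow> u \<in> V \<Longrightarrow> link v u \<Longrightarrow> sent t v \<subseteq> knows t u"
proof (induction t)
  case 0 then show ?case using sent_0 by auto
next
  case (Suc t)
  have "set_option (msg t v) \<subseteq> knows (Suc t) u"
    using knows_Suc[OF Suc.prems(2), of t] Suc.prems by auto
  then show ?case
    using Suc sent_Suc[OF Suc.prems(1)] knows_mono[of t "Suc t" u] by auto
qed

definition rank :: "nat set \<Rightarrow> nat \<Rightarrow> nat" where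
  "rank S x = card {y \<in> S. y < x}"

lemma knows_progress:
  assumes sent_progress: "\<And>x d v. v \<in> reach x d \<Longrightarrow> x \<notin> sent t v \<Longrightarrow> t \<le> rank (sent t v) x + d"
  shows "u \<in> reach x d \<Longrightarrow> x \<notin> knows t u \<Longrightarrow> t + 1 \<le> rank (knows t u) x + d"
proof (induction d arbitrary: u)
  case 0
  then show ?case using knows_mono[of 0 t u] by auto
next
  case (Suc d)
  show ?case
  proof (cases "u \<in> reach x d")
    case True
    then show ?thesis using Suc by fastforce
  next
    case False
    then obtain v where v: "v \<in> reach x d" "link v u" "u \<in> V" using Suc.prems by auto
    have "v \<in> V" using v reach_subset by auto
    have sent_known: "sent t v \<subseteq> knows t u" using sent_subset_knows_link[OF \<open>v \<in> V\<close> v(3,2)] .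
    then have "t \<le> rank (sent t v) x + d" using sent_progress[OF v(1)] Suc.prems by auto
    moreover have "rank (sent t v) x \<le> rank (knows t u) x"
      unfolding rank_def using finite_knows[OF v(3)] sent_known by (intro card_mono) auto
    ultimately show ?thesis by simp
  qed
qed

text \<open>Potential argument: \<open>x\<close> is delayed at a vertex only while smaller items are being
  forwarded there, and each of them delays it by one round.\<close>

lemma sent_progress: "u \<in> reach x d \<Longrightarrow> x \<notin> sent t u \<Longrightarrow> t \<le> rank (sent t u) x + d"
proof (induction t arbitrary: x d u)
  case 0 then show ?case by simp
next
  case (Suc t)
  have uV: "u \<in> V" using Suc.prems(1) reach_subset by auto
  have x_unsent: "x \<notin> sent t u" using Suc.prems(2) sent_Suc[OF uV] by auto
  show ?case
  proof (cases "\<exists>y. msg t u = Some y \<and> y < x")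
    case True
    then obtain y where y: "msg t u = Some y" "y < x" by auto
    have "y \<notin> sent t u" using msg_in_knows[OF uV y(1)] by simp
    moreover have "{z \<in> sent (Suc t) u. z < x} = insert y {z \<in> sent t u. z < x}"
      using sent_Suc[OF uV, of t] y by auto
    ultimately have "rank (sent (Suc t) u) x = Suc (rank (sent t u) x)"
      unfolding rank_def using finite_sent[OF uV, of t] by simp
    then show ?thesis using Suc.IH[OF Suc.prems(1) x_unsent] by simp
  next
    case False
    have small_sent: "{z \<in> knows t u. z < x} \<subseteq> sent t u \<and> x \<notin> knows t u"
    proof (cases "knows t u - sent t u = {}")
      case True then show ?thesis using x_unsent by auto
    next
      case pending: False
      then have m: "msg t u = Some (Min (knows t u - sent t u))" using msg_eq[OF uV] by auto
      then have "Min (knows t u - sent t u) \<noteq> x" using Suc.prems(2) sent_Suc[OF uV, of t] by auto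
      then have "x < Min (knows t u - sent t u)" using False m by auto
      then have "z \<in> knows t u \<Longrightarrow> z \<le> x \<Longrightarrow> z \<in> sent t u" for z
        using Min_le[of "knows t u - sent t u" z] finite_knows[OF uV, of t] by fastforce
      then show ?thesis using x_unsent by auto
    qed
    have "t + 1 \<le> rank (knows t u) x + d"
      using knows_progress[OF Suc.IH] Suc.prems(1) small_sent by blast
    moreover have "rank (knows t u) x \<le> rank (sent (Suc t) u) x"
      unfolding rank_def using finite_sent[OF uV, of "Suc t"] small_sent sent_Suc[OF uV, of t]
      by (intro card_mono) auto
    ultimately show ?thesis by simp
  qed
qed

lemma flooding_delivers:
  assumes "u \<in> reach x d" "x \<in> Items"
  shows "x \<in> knows (d + card Items) u"
proof -
  have uV: "u \<in> V" using assms(1) reach_subset by auto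
  have "x \<in> knows (d + rank Items x) u"
  proof (rule ccontr)
    assume "x \<notin> knows (d + rank Items x) u"
    then have "d + rank Items x + 1 \<le> rank (knows (d + rank Items x) u) x + d"
      using knows_progress[OF sent_progress] assms(1) by blast
    moreover have "rank (knows (d + rank Items x) u) x \<le> rank Items x"
      unfolding rank_def using finite_Items knows_subset[OF uV] by (intro card_mono) auto
    ultimately show False by simp
  qed
  moreover have "rank Items x \<le> card Items"
    unfolding rank_def using finite_Items by (intro card_mono) auto
  ultimately show ?thesis using knows_mono[of "d + rank Items x" "d + card Items" u] uV by auto
qed

end

section \<open>Counting random strings\<close>

lemma card_bool_lists: "card {xs :: bool list. length xs = q} = 2 ^ q"
  using card_lists_length_eq[of "UNIV :: bool set" q] by simp

lemma finite_bool_lists: "finite {xs :: bool list. length xs = q}"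
  using finite_lists_length_eq[of "UNIV :: bool set" q] by simp

lemma card_not_replicate_True:
  "card {xs. length xs = q \<and> xs \<noteq> replicate q True} = 2 ^ q - 1"
proof -
  have "{xs. length xs = q \<and> xs \<noteq> replicate q True} = {xs. length xs = q} - {replicate q True}"
    by auto
  then show ?thesis using card_bool_lists finite_bool_lists by (simp add: card_Diff_singleton_if)
qed

lemma bij_rand_space_where_PiE:
  assumes "V \<subseteq> {..<n}"
  shows "bij_betw (\<lambda>\<rho>. restrict \<rho> {..<n}) {\<rho> \<in> rand_space n q. \<forall>v\<in>V. Q (\<rho> v)}
    (PiE {..<n} (\<lambda>v. if v \<in> V then {xs. length xs = q \<and> Q xs} else {xs. length xs = q}))"
proof (rule bij_betw_byWitness[where f' = "\<lambda>f v. if v < n then f v else []"])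
  show "\<forall>\<rho>\<in>{\<rho> \<in> rand_space n q. \<forall>v\<in>V. Q (\<rho> v)}.
      (\<lambda>v. if v < n then restrict \<rho> {..<n} v else []) = \<rho>"
    by (auto simp: fun_eq_iff rand_space_def)
qed (use assms in \<open>auto simp: rand_space_def PiE_def Pi_def extensional_def fun_eq_iff split: if_splits\<close>)

lemma card_rand_space_where:
  assumes V: "V \<subseteq> {..<n}"
  shows "card {\<rho> \<in> rand_space n q. \<forall>v\<in>V. Q (\<rho> v)} =
         card {xs. length xs = q \<and> Q xs} ^ card V * (2 ^ q) ^ (n - card V)"
proof -
  have "card {\<rho> \<in> rand_space n q. \<forall>v\<in>V. Q (\<rho> v)} =
    (\<Prod>v<n. if v \<in> V then card {xs. length xs = q \<and> Q xs} else card {xs :: bool list. length xs = q})"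
    using bij_betw_same_card[OF bij_rand_space_where_PiE[OF V]] by (simp add: card_PiE if_distrib)
  also have "\<dots> = card {xs. length xs = q \<and> Q xs} ^ card V *
      card {xs :: bool list. length xs = q} ^ card ({..<n} - V)"
    by (subst prod.If_cases) (use V in \<open>auto simp: Int_absorb1 Diff_eq\<close>)
  also have "\<dots> = card {xs. length xs = q \<and> Q xs} ^ card V * (2 ^ q) ^ (n - card V)"
    using V finite_subset[OF V] by (simp add: card_bool_lists card_Diff_subset)
  finally show ?thesis .
qed

lemma card_rand_space: "card (rand_space n q) = (2 ^ q) ^ n"
  using card_rand_space_where[of "{}" n q "\<lambda>_. True"] by simp

lemma finite_rand_space: "finite (rand_space n q)"
proof -
  have "finite (PiE {..<n} (\<lambda>v. if v \<in> {} then {} else {xs :: bool list. length xs = q}))"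
    using finite_bool_lists by (intro finite_PiE) auto
  then show ?thesis
    using bij_betw_finite[OF bij_rand_space_where_PiE[of "{}" n q "\<lambda>_. True"]] by simp
qed

lemma card_ge_union_bound:
  fixes \<Omega> :: "'a set"
  assumes "finite \<Omega>" "\<Omega> \<noteq> {}" "\<Omega> - (B1 \<union> B2) \<subseteq> G" "G \<union> B1 \<union> B2 \<subseteq> \<Omega>"
    and "card B1 / card \<Omega> \<le> e1" "card B2 / card \<Omega> \<le> e2"
  shows "1 - e1 - e2 \<le> card G / card \<Omega>"
proof -
  have "card \<Omega> \<le> card G + card B1 + card B2"
  proof -
    have "\<Omega> \<subseteq> G \<union> B1 \<union> B2" using assms(3) by blast
    then have "card \<Omega> \<le> card (G \<union> B1 \<union> B2)" using assms(1,4) by (intro card_mono) (auto intro: finite_subset)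
    also have "\<dots> \<le> card G + card B1 + card B2" by (meson card_Un_le add_right_mono order_trans)
    finally show ?thesis .
  qed
  then have "1 \<le> card G / card \<Omega> + card B1 / card \<Omega> + card B2 / card \<Omega>"
    using assms(1,2) by (simp add: field_simps card_gt_0_iff flip: of_nat_add)
  then show ?thesis using assms(5,6) by linarith
qed

lemma power_self_le_fact: "real m ^ m \<le> 3 ^ m * fact m"
proof (induction m)
  case 0 then show ?case by simp
next
  case (Suc m)
  have "real (Suc m) ^ m \<le> 3 * real m ^ m"
  proof (cases "m = 0")
    case True then show ?thesis by simp
  next
    case False
    then have m_pos: "real m > 0" by simp
    have "(1 + 1 / real m) ^ m \<le> exp (1 / real m) ^ m"
      by (intro power_mono) (auto simp: add_nonneg_nonneg)
    also have "\<dots> = exp 1" using m_pos by (simp flip: exp_of_nat_mult)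
    also have "\<dots> \<le> 3" by (rule exp_le)
    finally have "(1 + 1 / real m) ^ m \<le> 3" .
    moreover have "real (Suc m) ^ m = (1 + 1 / real m) ^ m * real m ^ m"
      using m_pos by (simp add: power_mult_distrib[symmetric] field_simps)
    ultimately show ?thesis using m_pos by (simp add: mult_right_mono)
  qed
  then have "real (Suc m) ^ Suc m \<le> real (Suc m) * (3 * (3 ^ m * fact m))"
    using Suc.IH by (simp del: of_nat_Suc)
  then show ?case by (simp add: algebra_simps)
qed

lemma one_minus_inverse_power_le: "N \<ge> 1 \<Longrightarrow> (1 - 1 / real N) ^ N \<le> 1 / 2"
proof -
  assume N: "N \<ge> 1"
  have "(1 - 1 / real N) ^ N \<le> exp (- 1 / real N) ^ N"
    using N exp_ge_add_one_self[of "- 1 / real N"] by (intro power_mono) auto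
  also have "\<dots> = exp (- 1)" using N by (simp flip: exp_of_nat_mult)
  also have "\<dots> \<le> 1 / 2"
    using exp_ge_add_one_self[of 1] by (simp add: exp_minus field_simps)
  finally show ?thesis .
qed

section \<open>The algorithm\<close>

text \<open>Messages and items are tuples of numbers below a base \<open>N\<close>, written as base-\<open>N\<close> numbers.
  A counter \<open>(a, b, d)\<close> says that the last marker has code \<open>a\<close> and lies \<open>b\<close> hops and
  weight \<open>d\<close> before the current vertex. The code of \<open>s\<close> is 0, that of any other vertex is its
  identifier plus one. The item \<open>(a, b, d, e, f)\<close> of a marker or of \<open>t\<close> with code \<open>e\<close> records
  the counter it received and whether it is \<open>t\<close> (\<open>f = 1\<close>).\<close>

definition enc_counter :: "nat \<Rightarrow> nat \<times> nat \<times> nat \<Rightarrow> nat" where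
  "enc_counter N x = (case x of (a, b, d) \<Rightarrow> a + N * (b + N * d))"

definition dec_counter :: "nat \<Rightarrow> nat \<Rightarrow> nat \<times> nat \<times> nat" where
  "dec_counter N m = (m mod N, m div N mod N, m div N div N)"

definition enc_item :: "nat \<Rightarrow> nat \<Rightarrow> nat \<Rightarrow> nat \<Rightarrow> nat \<Rightarrow> nat \<Rightarrow> nat" where
  "enc_item N a b d e f = a + N * (b + N * (d + N * (e + N * f)))"

definition item_prev :: "nat \<Rightarrow> nat \<Rightarrow> nat" where "item_prev N y = y mod N"
definition item_hops :: "nat \<Rightarrow> nat \<Rightarrow> nat" where "item_hops N y = y div N mod N"
definition item_wt :: "nat \<Rightarrow> nat \<Rightarrow> nat" where "item_wt N y = y div N div N mod N"
definition item_id :: "nat \<Rightarrow> nat \<Rightarrow> nat" where "item_id N y = y div N div N div N mod N"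
definition item_last :: "nat \<Rightarrow> nat \<Rightarrow> nat" where "item_last N y = y div N div N div N div N"

lemma dec_enc_counter: "a < N \<Longrightarrow> b < N \<Longrightarrow> dec_counter N (enc_counter N (a, b, d)) = (a, b, d)"
  by (simp add: dec_counter_def enc_counter_def)

lemma enc_counter_less: "a < N \<Longrightarrow> b < N \<Longrightarrow> d < N \<Longrightarrow> enc_counter N (a, b, d) < N ^ 3"
proof -
  assume "a < N" "b < N" "d < N"
  then have "a + N * (b + N * d) \<le> (N - 1) + N * ((N - 1) + N * (N - 1))"
    by (intro add_mono mult_le_mono order.refl) auto
  also have "\<dots> < N ^ 3" using \<open>a < N\<close> by (cases N) (auto simp: power3_eq_cube algebra_simps)
  finally show ?thesis by (simp add: enc_counter_def)
qed

lemma item_fields: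
  assumes "a < N" "b < N" "d < N" "e < N"
  shows "item_prev N (enc_item N a b d e f) = a" "item_hops N (enc_item N a b d e f) = b"
    "item_wt N (enc_item N a b d e f) = d" "item_id N (enc_item N a b d e f) = e"
    "item_last N (enc_item N a b d e f) = f"
  using assms
  by (simp_all add: item_prev_def item_hops_def item_wt_def item_id_def item_last_def enc_item_def)

lemma enc_item_less:
  assumes "a < N" "b < N" "d < N" "e < N" "f < N"
  shows "enc_item N a b d e f < N ^ 5"
proof -
  have digit: "x < N \<Longrightarrow> y < N ^ k \<Longrightarrow> x + N * y < N ^ Suc k" for x y k
  proof -
    assume "x < N" "y < N ^ k"
    then have "x + N * y < N * Suc y" "Suc y \<le> N ^ k" by auto
    then show ?thesis by (metis mult_le_mono2 order_less_le_trans power_Suc)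
  qed
  show ?thesis
    unfolding enc_item_def using digit[OF assms(1) digit[OF assms(2) digit[OF assms(3)
        digit[OF assms(4), of f 1]]]] assms(5)
    by (simp add: eval_nat_numeral)
qed

definition has_pred :: "local_input \<Rightarrow> bool" where
  "has_pred inp = (\<exists>nb \<in> li_nbrs inp. nb_pin nb)"

definition pred_nbr :: "local_input \<Rightarrow> nbr_info" where
  "pred_nbr inp = (SOME nb. nb \<in> li_nbrs inp \<and> nb_pin nb)"

definition has_succ :: "local_input \<Rightarrow> bool" where
  "has_succ inp = (\<exists>nb \<in> li_nbrs inp. nb_pout nb)"

definition succ_nbr :: "local_input \<Rightarrow> nbr_info" where
  "succ_nbr inp = (SOME nb. nb \<in> li_nbrs inp \<and> nb_pout nb)"

text \<open>Following the \<open>item_prev\<close> links from the marker with code \<open>a\<close> back to \<open>s\<close> (with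
  \<open>fuel\<close> bounding the number of steps) sums up hops and weights: the index of that marker and
  its distance from \<open>s\<close>.\<close>

fun chain_back :: "nat \<Rightarrow> nat set \<Rightarrow> nat \<Rightarrow> nat \<Rightarrow> nat \<times> nat" where
  "chain_back N K 0 a = (0, 0)"
| "chain_back N K (Suc fuel) a = (if a = 0 then (0, 0) else
     (let y = (SOME y. y \<in> K \<and> item_id N y = a); p = chain_back N K fuel (item_prev N y)
      in (fst p + item_hops N y, snd p + item_wt N y)))"

definition chain_total :: "nat \<Rightarrow> nat set \<Rightarrow> nat \<Rightarrow> nat \<times> nat" where
  "chain_total N K fuel = (let y = (SOME y. y \<in> K \<and> item_last N y = 1);
     p = chain_back N K fuel (item_prev N y) in (fst p + item_hops N y, snd p + item_wt N y))"

definition chain_closed :: "nat \<Rightarrow> nat set \<Rightarrow> bool" where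
  "chain_closed N K \<longleftrightarrow> (\<exists>y\<in>K. item_last N y = 1) \<and>
     (\<forall>y\<in>K. item_prev N y = 0 \<or> (\<exists>z\<in>K. item_id N z = item_prev N y))"

text \<open>A vertex is a marker iff it is \<open>s\<close> or all its \<open>mark_bits n\<close> random bits are set, so
  \<open>2 ^ mark_bits n \<approx> \<surd>n\<close> is the expected distance between markers. Phase 1 lasts
  \<open>phase1_len n\<close> rounds, during which counters travel along \<open>P\<close>; afterwards the items are
  flooded. The state of a vertex is the last counter received from its predecessor, the
  items received and the items forwarded.\<close>

type_synonym node_state = "(nat \<times> nat \<times> nat) option \<times> nat set \<times> nat set"

locale alg_params =
  fixes c W I :: nat
begin

definition base :: "nat \<Rightarrow> nat" where "base n = n ^ (W + I + 2)"
definition mark_bits :: "nat \<Rightarrow> nat" where "mark_bits n = (floorlog 2 n - 1) div 2"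
definition phase1_len :: "nat \<Rightarrow> nat" where
  "phase1_len n = 2 ^ mark_bits n * ((c + 2) * floorlog 2 n)"
definition msg_exp :: nat where "msg_exp = 5 * (W + I + 2)"

definition is_marker :: "local_input \<Rightarrow> bool" where
  "is_marker inp \<longleftrightarrow> li_src inp \<or> li_rand inp = replicate (mark_bits (li_n inp)) True"

definition counter :: "local_input \<Rightarrow> node_state \<Rightarrow> (nat \<times> nat \<times> nat) option" where
  "counter inp s = (if li_src inp then Some (0, 0, 0)
     else if is_marker inp then Some (Suc (li_id inp), 0, 0) else fst s)"

definition own_item :: "local_input \<Rightarrow> node_state \<Rightarrow> nat set" where
  "own_item inp s = (if \<not> li_src inp \<and> (is_marker inp \<or> li_tgt inp) then
     (case fst s of
        Some (a, b, d) \<Rightarrow>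
          {enc_item (base (li_n inp)) a b d (Suc (li_id inp)) (if li_tgt inp then 1 else 0)}
      | None \<Rightarrow> {})
     else {})"

definition known :: "local_input \<Rightarrow> node_state \<Rightarrow> nat set" where
  "known inp s = own_item inp s \<union> fst (snd s)"

definition pending :: "local_input \<Rightarrow> node_state \<Rightarrow> nat set" where
  "pending inp s = known inp s - snd (snd s)"

definition send_raw :: "local_input \<Rightarrow> node_state \<Rightarrow> nat \<Rightarrow> nat \<Rightarrow> nat option" where
  "send_raw inp s r j = (if r < phase1_len (li_n inp) then
       (if has_succ inp \<and> j = nb_id (succ_nbr inp)
        then map_option (enc_counter (base (li_n inp))) (counter inp s) else None)
     else (if pending inp s = {} then None else Some (Min (pending inp s))))"

text \<open>Oversized messages are suppressed, which makes the message bound hold by construction;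
  on valid instances nothing is ever suppressed.\<close>

definition send :: "local_input \<Rightarrow> node_state \<Rightarrow> nat \<Rightarrow> nat \<Rightarrow> nat option" where
  "send inp s r j = (case send_raw inp s r j of
       None \<Rightarrow> None
     | Some x \<Rightarrow> (if x < max 2 (li_n inp) ^ msg_exp then Some x else None))"

definition update :: "local_input \<Rightarrow> node_state \<Rightarrow> nat \<Rightarrow> inbox \<Rightarrow> node_state" where
  "update inp s r ib = (if r < phase1_len (li_n inp) then
       ((if has_pred inp then
           (case ib (nb_id (pred_nbr inp)) of
              Some m \<Rightarrow> Some (case dec_counter (base (li_n inp)) m of
                               (a, b, d) \<Rightarrow> (a, Suc b, d + the (nb_win (pred_nbr inp))))
            | None \<Rightarrow> fst s)
         else fst s), snd s)
     else (fst s, fst (snd s) \<union> {m. \<exists>j. ib j = Some m},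
           snd (snd s) \<union> (if pending inp s = {} then {} else {Min (pending inp s)})))"

lemma update_phase2:
  assumes "phase1_len (li_n inp) \<le> r"
  shows "fst (update inp s r ib) = fst s"
    and "fst (snd (update inp s r ib)) = fst (snd s) \<union> {m. \<exists>j. ib j = Some m}"
    and "snd (snd (update inp s r ib)) =
      snd (snd s) \<union> (if pending inp s = {} then {} else {Min (pending inp s)})"
  using assms by (simp_all add: update_def)

text \<open>A path vertex outputs once it knows a closed chain of items: its index and distance from
  \<open>s\<close> are those of its last marker plus its counter, and its distance to \<open>t\<close> is the
  difference to the total.\<close>

definition node_output :: "local_input \<Rightarrow> node_state \<Rightarrow> nat \<Rightarrow> (nat \<times> nat \<times> nat) option" where
  "node_output inp s r = (if \<not> li_src inp \<and> \<not> has_pred inp then Some (0, 0, 0)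
     else if li_src inp \<and> li_tgt inp then Some (0, 0, 0)
     else if phase1_len (li_n inp) \<le> r \<and> chain_closed (base (li_n inp)) (known inp s)
             \<and> counter inp s \<noteq> None then
       (case counter inp s of Some (a, b, d) \<Rightarrow>
          (let N = base (li_n inp); K = known inp s;
               p = chain_back N K (li_n inp) a; tt = chain_total N K (li_n inp)
           in Some (fst p + b, snd p + d, snd tt - (snd p + d))))
     else None)"

definition state_after :: "local_input \<Rightarrow> inbox list \<Rightarrow> node_state" where
  "state_after inp H = fst (foldl (\<lambda>(s, r) x. (update inp s r x, Suc r)) ((None, {}, {}), 0) H)"

lemma foldl_update_round:
  "snd (foldl (\<lambda>(s, r) x. (update inp s r x, Suc r)) (s0, r0) H) = r0 + length H"
  by (induction H arbitrary: s0 r0) auto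

lemma state_after_snoc: "state_after inp (H @ [x]) = update inp (state_after inp H) (length H) x"
  unfolding state_after_def using foldl_update_round[of inp "(None, {}, {})" 0 H]
  by (simp add: case_prod_beta)

lemma state_after_Nil: "state_after inp [] = (None, {}, {})"
  by (simp add: state_after_def)

definition path_alg :: algorithm where
  "path_alg = \<lparr> al_send = (\<lambda>inp H j. send inp (state_after inp H) (length H) j),
                al_out = (\<lambda>inp H. node_output inp (state_after inp H) (length H)),
                al_rbits = mark_bits \<rparr>"

lemma al_send_path_alg [simp]: "al_send path_alg inp H j = send inp (state_after inp H) (length H) j"
  and al_out_path_alg [simp]: "al_out path_alg inp H = node_output inp (state_after inp H) (length H)"
  and al_rbits_path_alg [simp]: "al_rbits path_alg = mark_bits"
  by (simp_all add: path_alg_def)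

lemma congest_bounded_path_alg: "congest_bounded path_alg msg_exp"
  unfolding congest_bounded_def path_alg_def send_def by (auto split: option.splits if_splits)

end

locale execution = alg_params +
  fixes n :: nat and w :: "nat \<Rightarrow> nat \<Rightarrow> nat option" and ident :: "nat \<Rightarrow> nat"
    and ps :: "nat list" and \<rho> :: "nat \<Rightarrow> bool list"
  assumes valid: "valid_instance n W I w ident ps" and n2: "2 \<le> n"
begin

abbreviation lin where "lin v \<equiv> local_in n w ident ps \<rho> v"
abbreviation hs where "hs r v \<equiv> hist path_alg n w ident ps \<rho> r v"
definition St where "St r v = state_after (lin v) (hs r v)"

lemma weight_bounds: "w u v = Some k \<Longrightarrow> u < n \<and> v < n \<and> u \<noteq> v \<and> 1 \<le> k \<and> k \<le> n ^ W"
  using valid unfolding valid_instance_def by blast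
lemma inj_ident: "inj_on ident {..<n}" using valid unfolding valid_instance_def by blast
lemma ident_bound: "v < n \<Longrightarrow> ident v < n ^ I" using valid unfolding valid_instance_def by blast
lemma connected: "u < n \<Longrightarrow> v < n \<Longrightarrow> \<exists>xs. is_uwalk w xs \<and> hd xs = u \<and> last xs = v"
  using valid unfolding valid_instance_def by blast
lemma path_walk: "is_walk w ps" and path_distinct: "distinct ps" and path_vertices: "set ps \<subseteq> {..<n}"
  and path_shortest: "walk_weight w ps = dist w (hd ps) (last ps)"
  using valid unfolding valid_instance_def by blast+

lemma adj_lt: "adj w u v \<Longrightarrow> u < n \<and> v < n"
  unfolding adj_def using weight_bounds by fastforce

lemma hs_length: "length (hs r v) = r"
  by (induction r) auto

definition inbox_at :: "nat \<Rightarrow> nat \<Rightarrow> inbox" where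
  "inbox_at r v = (\<lambda>j. if \<exists>u<n. adj w u v \<and> ident u = j
             then (let u = (THE u. u < n \<and> adj w u v \<and> ident u = j)
                   in send (lin u) (St r u) r (ident v))
             else None)"

lemma St_0: "St 0 v = (None, {}, {})"
  by (simp add: St_def state_after_Nil)

lemma St_Suc: "St (Suc r) v = update (lin v) (St r v) r (inbox_at r v)"
proof -
  have e: "al_send path_alg (lin u) (hs r u) j = send (lin u) (St r u) r j" for u j
    by (simp add: St_def hs_length)
  have "hs (Suc r) v = hs r v @ [inbox_at r v]"
    unfolding inbox_at_def hist.simps e by simp
  then show ?thesis unfolding St_def by (simp add: state_after_snoc hs_length)
qed

lemma inbox_from_nbr: "u < n \<Longrightarrow> adj w u v \<Longrightarrow> inbox_at r v (ident u) = send (lin u) (St r u) r (ident v)"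
proof -
  assume u: "u < n" "adj w u v"
  have "(THE u'. u' < n \<and> adj w u' v \<and> ident u' = ident u) = u"
    apply (rule the_equality) using u inj_ident by (auto simp: inj_on_def)
  then show ?thesis unfolding inbox_at_def using u by auto
qed

lemma inbox_SomeD:
  "inbox_at r v j = Some m \<Longrightarrow>
   \<exists>u<n. adj w u v \<and> ident u = j \<and> send (lin u) (St r u) r (ident v) = Some m"
proof -
  assume a: "inbox_at r v j = Some m"
  then obtain u where u: "u < n" "adj w u v" "ident u = j"
    unfolding inbox_at_def by (auto split: if_splits)
  then show ?thesis using inbox_from_nbr[OF u(1,2), of r] a by auto
qed

lemma local_in_simps[simp]: "li_n (lin v) = n" "li_id (lin v) = ident v" "li_rand (lin v) = \<rho> v"
  "li_src (lin v) = (v = hd ps)" "li_tgt (lin v) = (v = last ps)"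
  by (simp_all add: local_in_def)

lemma nbrs_eq: "li_nbrs (lin v) = {\<lparr> nb_id = ident u, nb_wout = w v u, nb_win = w u v,
                    nb_pout = ((v, u) \<in> path_edges ps), nb_pin = ((u, v) \<in> path_edges ps) \<rparr>
                  | u. u < n \<and> adj w u v}"
  by (simp add: local_in_def)

abbreviation h where "h \<equiv> length ps - 1"
abbreviation P where "P i \<equiv> ps ! i"

lemma path_nonempty: "ps \<noteq> []" using path_walk by (simp add: is_walk_def)
lemma length_path: "length ps = Suc h" using path_nonempty by (cases ps) auto
lemma P_less_n: "i \<le> h \<Longrightarrow> P i < n" using path_vertices length_path
  by (metis lessThan_iff less_Suc_eq_le nth_mem subsetD)
lemma P_eq_iff: "i \<le> h \<Longrightarrow> j \<le> h \<Longrightarrow> P i = P j \<longleftrightarrow> i = j"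
  using path_distinct length_path by (simp add: nth_eq_iff_index_eq)
lemma hd_P: "hd ps = P 0" using path_nonempty by (simp add: hd_conv_nth)
lemma last_P: "last ps = P h" using path_nonempty by (simp add: last_conv_nth)

lemma path_edge: "i < h \<Longrightarrow> w (P i) (P (Suc i)) \<noteq> None"
  using path_walk length_path unfolding is_walk_def by auto

lemma path_edges_iff: "(x, y) \<in> path_edges ps \<longleftrightarrow> (\<exists>k<h. x = P k \<and> y = P (Suc k))"
proof -
  have "(x, y) \<in> path_edges ps \<longleftrightarrow> (\<exists>k. Suc k < length ps \<and> x = P k \<and> y = P (Suc k))"
    unfolding path_edges_def by blast
  moreover have "Suc k < length ps \<longleftrightarrow> k < h" for k by (simp add: less_diff_conv)
  ultimately show ?thesis by blast
qed

lemma in_path_iff: "v \<in> set ps \<longleftrightarrow> (\<exists>i\<le>h. v = P i)"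
  using length_path unfolding in_set_conv_nth by (metis less_Suc_eq_le)

definition nbr_rec :: "nat \<Rightarrow> nat \<Rightarrow> nbr_info" where
  "nbr_rec v u = \<lparr> nb_id = ident u, nb_wout = w v u, nb_win = w u v,
                    nb_pout = ((v, u) \<in> path_edges ps), nb_pin = ((u, v) \<in> path_edges ps) \<rparr>"

lemma nbrs_eq_nbr_rec: "li_nbrs (lin v) = {nbr_rec v u | u. u < n \<and> adj w u v}"
  unfolding nbrs_eq nbr_rec_def by simp

lemma pred_nbrs_P: "i \<le> h \<Longrightarrow> {nb \<in> li_nbrs (lin (P i)). nb_pin nb} = (if i = 0 then {} else {nbr_rec (P i) (P (i - 1))})"
proof -
  assume i: "i \<le> h"
  have "nb_pin (nbr_rec (P i) u) \<longleftrightarrow> (0 < i \<and> u = P (i - 1))" if "u < n" for u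
  proof -
    have "nb_pin (nbr_rec (P i) u) \<longleftrightarrow> (\<exists>k<h. u = P k \<and> P i = P (Suc k))"
      by (simp add: nbr_rec_def path_edges_iff)
    also have "\<dots> \<longleftrightarrow> (0 < i \<and> u = P (i - 1))"
    proof
      assume "\<exists>k<h. u = P k \<and> P i = P (Suc k)"
      then obtain k where k: "k < h" "u = P k" "P i = P (Suc k)" by blast
      then have "i = Suc k" using P_eq_iff[of i "Suc k"] i by simp
      then show "0 < i \<and> u = P (i - 1)" using k by simp
    next
      assume a: "0 < i \<and> u = P (i - 1)"
      then have "i - 1 < h \<and> u = P (i - 1) \<and> P i = P (Suc (i - 1))" using i by auto
      then show "\<exists>k<h. u = P k \<and> P i = P (Suc k)" by blast
    qed
    finally show ?thesis .
  qed
  moreover have "0 < i \<Longrightarrow> adj w (P (i - 1)) (P i)"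
    using path_edge[of "i - 1"] i by (simp add: adj_def)
  moreover have "0 < i \<Longrightarrow> P (i - 1) < n" using P_less_n i by auto
  ultimately show ?thesis unfolding nbrs_eq_nbr_rec by auto
qed

lemma succ_nbrs_P:
  "i \<le> h \<Longrightarrow> {nb \<in> li_nbrs (lin (P i)). nb_pout nb} = (if i = h then {} else {nbr_rec (P i) (P (Suc i))})"
proof -
  assume i: "i \<le> h"
  have pout: "nb_pout (nbr_rec (P i) u) \<longleftrightarrow> i < h \<and> u = P (Suc i)" for u
    using P_eq_iff i by (auto simp: nbr_rec_def path_edges_iff)
  have "i < h \<Longrightarrow> P (Suc i) < n \<and> adj w (P (Suc i)) (P i)"
    using path_edge[of i] P_less_n[of "Suc i"] by (simp add: adj_def)
  then show ?thesis unfolding nbrs_eq_nbr_rec using pout i by auto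
qed

lemma has_pred_P: "i \<le> h \<Longrightarrow> has_pred (lin (P i)) \<longleftrightarrow> 0 < i"
  using pred_nbrs_P[of i] unfolding has_pred_def by (auto split: if_splits)
lemma pred_nbr_P: "0 < i \<Longrightarrow> i \<le> h \<Longrightarrow> pred_nbr (lin (P i)) = nbr_rec (P i) (P (i - 1))"
  using pred_nbrs_P[of i] unfolding pred_nbr_def by (auto split: if_splits)
lemma has_succ_P: "i \<le> h \<Longrightarrow> has_succ (lin (P i)) \<longleftrightarrow> i < h"
  using succ_nbrs_P[of i] unfolding has_succ_def by (auto split: if_splits)
lemma succ_nbr_P: "i < h \<Longrightarrow> succ_nbr (lin (P i)) = nbr_rec (P i) (P (Suc i))"
  using succ_nbrs_P[of i] unfolding succ_nbr_def by (auto split: if_splits)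

lemma off_path_input:
  "v \<notin> set ps \<Longrightarrow> \<not> has_pred (lin v) \<and> \<not> has_succ (lin v) \<and> v \<noteq> hd ps \<and> v \<noteq> last ps"
proof -
  assume "v \<notin> set ps"
  then have nv: "\<And>i. i \<le> h \<Longrightarrow> v \<noteq> P i" using in_path_iff by blast
  have "\<not> (k < h \<and> v = P (Suc k))" for k using nv[of "Suc k"] by auto
  moreover have "\<not> (k < h \<and> v = P k)" for k using nv[of k] by auto
  ultimately show ?thesis
    unfolding has_pred_def has_succ_def nbrs_eq_nbr_rec using nv[of 0] nv[of h] hd_P last_P
    by (auto simp: nbr_rec_def path_edges_iff; blast)
qed

lemma P_eq_hd_iff: "i \<le> h \<Longrightarrow> (P i = hd ps) \<longleftrightarrow> i = 0"
  using P_eq_iff hd_P by auto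
lemma P_eq_last_iff: "i \<le> h \<Longrightarrow> (P i = last ps) \<longleftrightarrow> i = h"
  using P_eq_iff last_P by auto


subsection \<open>Phase 1: counters along the path\<close>

abbreviation L where "L \<equiv> phase1_len n"
abbreviation N where "N \<equiv> base n"

definition marked :: "nat \<Rightarrow> bool" where "marked i \<longleftrightarrow> i = 0 \<or> \<rho> (P i) = replicate (mark_bits n) True"

fun last_mark :: "nat \<Rightarrow> nat" where
  "last_mark 0 = 0"
| "last_mark (Suc i) = (if marked (Suc i) then Suc i else last_mark i)"

definition vcode :: "nat \<Rightarrow> nat" where "vcode j = (if j = 0 then 0 else Suc (ident (P j)))"
definition edge_wt :: "nat \<Rightarrow> nat" where "edge_wt i = the (w (P i) (P (Suc i)))"
definition pre_wt :: "nat \<Rightarrow> nat" where "pre_wt i = (\<Sum>k<i. edge_wt k)"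

lemma last_mark_le: "last_mark i \<le> i" by (induction i) auto
lemma marked_last_mark: "marked (last_mark i)" by (induction i) (auto simp: marked_def)
lemma pre_wt_Suc: "pre_wt (Suc i) = pre_wt i + edge_wt i" by (simp add: pre_wt_def)
lemma pre_wt_mono: "i \<le> j \<Longrightarrow> pre_wt i \<le> pre_wt j"
  unfolding pre_wt_def by (rule sum_mono2) auto

lemma edge_wt_le: "i < h \<Longrightarrow> edge_wt i \<le> n ^ W"
  using path_edge[of i] weight_bounds unfolding edge_wt_def by fastforce

lemma pre_wt_le: "i \<le> h \<Longrightarrow> pre_wt i \<le> i * n ^ W"
proof (induction i)
  case (Suc i) then show ?case using edge_wt_le[of i] by (simp add: pre_wt_Suc)
qed (simp add: pre_wt_def)

lemma h_less_n: "h < n"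
  using length_le_if_distinct[OF path_distinct path_vertices] length_path by simp

lemma base_large: "n ^ I < N" "n < N" "n * n ^ W < N"
proof -
  have n1: "1 < n" using n2 by simp
  show "n ^ I < N" unfolding base_def using n1 by (intro power_strict_increasing) auto
  show "n < N" unfolding base_def using n1 power_strict_increasing[of 1 "W + I + 2" n] by simp
  have "n * n ^ W = n ^ (W + 1)" by simp
  also have "\<dots> < N" unfolding base_def using n1 by (intro power_strict_increasing) auto
  finally show "n * n ^ W < N" .
qed

lemma vcode_less_base: "j \<le> h \<Longrightarrow> vcode j < N"
  using ident_bound[OF P_less_n[of j]] base_large(1) by (auto simp: vcode_def)

lemma pre_wt_less_base: "i \<le> h \<Longrightarrow> pre_wt i < N"
proof -
  assume "i \<le> h"
  then have "pre_wt i \<le> h * n ^ W" using pre_wt_le[of i] h_less_n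
    by (meson le_trans mult_le_mono1)
  also have "\<dots> \<le> n * n ^ W" using h_less_n by simp
  finally show ?thesis using base_large(3) by simp
qed

lemma base_power_le: "k \<le> 5 \<Longrightarrow> N ^ k \<le> max 2 n ^ msg_exp"
proof -
  assume "k \<le> 5"
  have "N ^ k = n ^ ((W + I + 2) * k)" by (simp only: base_def power_mult)
  also have "\<dots> \<le> n ^ msg_exp"
    unfolding msg_exp_def using n2 mult_le_mono2[OF \<open>k \<le> 5\<close>, of "W + I + 2"]
    by (intro power_increasing) (auto simp: mult.commute)
  finally show ?thesis using n2 by simp
qed

text \<open>The counter held by \<open>P i\<close>, and the one received from its predecessor, after \<open>r\<close>
  rounds of phase 1: it is defined once \<open>r\<close> covers the hops from the last marker.\<close>

definition counter_at :: "nat \<Rightarrow> nat \<Rightarrow> (nat \<times> nat \<times> nat) option" where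
  "counter_at i r = (if i - last_mark i \<le> r then Some (vcode (last_mark i), i - last_mark i, pre_wt i - pre_wt (last_mark i)) else None)"
definition received_at :: "nat \<Rightarrow> nat \<Rightarrow> (nat \<times> nat \<times> nat) option" where
  "received_at i r = (if 0 < i \<and> i - last_mark (i - 1) \<le> r
     then Some (vcode (last_mark (i - 1)), i - last_mark (i - 1), pre_wt i - pre_wt (last_mark (i - 1)))
     else None)"

lemma is_marker_P: "i \<le> h \<Longrightarrow> is_marker (lin (P i)) \<longleftrightarrow> marked i"
  using P_eq_hd_iff by (simp add: is_marker_def marked_def)

lemma counter_eq_counter_at: "i \<le> h \<Longrightarrow> fst s = received_at i r \<Longrightarrow> counter (lin (P i)) s = counter_at i r"
proof -
  assume i: "i \<le> h" and f: "fst s = received_at i r"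
  show ?thesis
  proof (cases "i = 0")
    case True then show ?thesis using P_eq_hd_iff[OF i] by (simp add: counter_def counter_at_def vcode_def)
  next
    case False
    then obtain k where k: "i = Suc k" by (cases i) auto
    show ?thesis
    proof (cases "marked i")
      case True
      then show ?thesis using P_eq_hd_iff[OF i] is_marker_P[OF i] False k by (simp add: counter_def counter_at_def vcode_def)
    next
      case nm: False
      then show ?thesis using P_eq_hd_iff[OF i] is_marker_P[OF i] False k f
        by (simp add: counter_def counter_at_def received_at_def)
    qed
  qed
qed

lemma counter_at_less_base: "i \<le> h \<Longrightarrow> counter_at i r = Some (a, b, d) \<Longrightarrow> a < N \<and> b < N \<and> d < N"
proof -
  assume i: "i \<le> h" and c: "counter_at i r = Some (a, b, d)"
  then have e: "a = vcode (last_mark i)" "b = i - last_mark i" "d = pre_wt i - pre_wt (last_mark i)"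
    unfolding counter_at_def by (auto split: if_splits)
  have "last_mark i \<le> h" using last_mark_le[of i] i by simp
  then show ?thesis using e vcode_less_base pre_wt_less_base[OF i] h_less_n base_large(2) i by fastforce
qed

lemma counter_message:
  assumes k: "k < h" and r: "r < L" and received: "fst (St r (P k)) = received_at k r"
  shows "inbox_at r (P (Suc k)) (ident (P k)) = map_option (enc_counter N) (counter_at k r)"
proof -
  have "adj w (P k) (P (Suc k))" using path_edge[OF k] by (simp add: adj_def)
  then have inbox: "inbox_at r (P (Suc k)) (ident (P k)) = send (lin (P k)) (St r (P k)) r (ident (P (Suc k)))"
    using inbox_from_nbr P_less_n k by simp
  have "counter (lin (P k)) (St r (P k)) = counter_at k r"
    using counter_eq_counter_at[of k "St r (P k)" r] received k by simp
  then have raw: "send_raw (lin (P k)) (St r (P k)) r (ident (P (Suc k)))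
      = map_option (enc_counter N) (counter_at k r)"
    using r has_succ_P[of k] k succ_nbr_P[OF k] by (simp add: send_raw_def nbr_rec_def)
  show ?thesis
  proof (cases "counter_at k r")
    case (Some x)
    then obtain a b d where x: "x = (a, b, d)" by (cases x) auto
    have "a < N \<and> b < N \<and> d < N" using counter_at_less_base[of k r a b d] k Some x by simp
    then have "enc_counter N x < N ^ 3" using x by (simp add: enc_counter_less)
    then have "enc_counter N x < max 2 n ^ msg_exp" using base_power_le[of 3] by simp
    then show ?thesis using inbox raw Some by (simp add: send_def)
  qed (simp add: inbox send_def raw)
qed

lemma received_at_Suc:
  assumes k: "k < h" and r: "r < L" and received: "fst (St r (P k)) = received_at k r"
    and received': "fst (St r (P (Suc k))) = received_at (Suc k) r"
  shows "fst (St (Suc r) (P (Suc k))) = received_at (Suc k) (Suc r)"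
proof -
  have i: "Suc k \<le> h" using k by simp
  have pred: "pred_nbr (lin (P (Suc k))) = nbr_rec (P (Suc k)) (P k)" using pred_nbr_P[OF _ i] by simp
  note inbox = counter_message[OF k r received]
  have jk: "last_mark k \<le> k" by (rule last_mark_le)
  show ?thesis
  proof (cases "counter_at k r")
    case None
    then have "\<not> (Suc k - last_mark k \<le> Suc r)" unfolding counter_at_def by (auto split: if_splits)
    then show ?thesis using None inbox pred received' r has_pred_P[OF i]
      by (simp add: St_Suc update_def received_at_def nbr_rec_def)
  next
    case (Some x)
    then have c: "k - last_mark k \<le> r"
      "x = (vcode (last_mark k), k - last_mark k, pre_wt k - pre_wt (last_mark k))"
      unfolding counter_at_def by (auto split: if_splits)
    have small: "vcode (last_mark k) < N" "k - last_mark k < N"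
      using vcode_less_base[of "last_mark k"] jk k h_less_n base_large(2) by auto
    have "fst (St (Suc r) (P (Suc k))) =
        Some (vcode (last_mark k), Suc (k - last_mark k), pre_wt k - pre_wt (last_mark k) + edge_wt k)"
      using inbox pred r has_pred_P[OF i] Some c dec_enc_counter[OF small]
      by (simp add: St_Suc update_def nbr_rec_def edge_wt_def)
    also have "\<dots> = received_at (Suc k) (Suc r)"
      using c(1) jk pre_wt_mono[OF jk] by (simp add: received_at_def pre_wt_Suc Suc_diff_le)
    finally show ?thesis .
  qed
qed

lemma phase1_invariant:
  "r \<le> L \<Longrightarrow> (\<forall>i\<le>h. fst (St r (P i)) = received_at i r) \<and>
     (\<forall>v<n. v \<notin> set ps \<longrightarrow> fst (St r v) = None) \<and> (\<forall>v. snd (St r v) = ({}, {}))"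
proof (induction r)
  case 0
  have "0 < i \<Longrightarrow> \<not> (i - last_mark (i - 1) \<le> 0)" for i using last_mark_le[of "i - 1"] by auto
  then show ?case by (auto simp: St_0 received_at_def)
next
  case (Suc r)
  then have r: "r < L" by simp
  have IH: "\<forall>i\<le>h. fst (St r (P i)) = received_at i r" "\<forall>v<n. v \<notin> set ps \<longrightarrow> fst (St r v) = None"
    "\<forall>v. snd (St r v) = ({}, {})"
    using Suc by auto
  have "fst (St (Suc r) (P i)) = received_at i (Suc r)" if i: "i \<le> h" for i
  proof (cases i)
    case 0
    then show ?thesis using IH(1) i has_pred_P[OF i] r by (simp add: St_Suc update_def received_at_def)
  next
    case (Suc k)
    then show ?thesis using received_at_Suc[of k r] IH(1) i r by simp
  qed
  moreover have "fst (St (Suc r) v) = None" if "v < n" "v \<notin> set ps" for v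
    using IH(2) that off_path_input[OF that(2)] r by (simp add: St_Suc update_def)
  moreover have "snd (St (Suc r) v) = ({}, {})" for v
    using IH(3) r by (simp add: St_Suc update_def)
  ultimately show ?case by blast
qed

subsection \<open>Phase 2: flooding the items\<close>

lemma fst_St_stable: "L \<le> r \<Longrightarrow> fst (St r v) = fst (St L v)"
proof (induction r rule: dec_induct)
  case (step r)
  then show ?case using update_phase2(1)[of "lin v" r] by (simp add: St_Suc)
qed simp

lemma own_item_stable: "L \<le> r \<Longrightarrow> own_item (lin v) (St r v) = own_item (lin v) (St L v)"
proof -
  assume "L \<le> r"
  then have "fst (St r v) = fst (St L v)" by (rule fst_St_stable)
  then show ?thesis unfolding own_item_def by simp
qed

definition knows where "knows t u = known (lin u) (St (L + t) u)"
definition sent where "sent t u = snd (snd (St (L + t) u))"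
definition msg where "msg t u = (if knows t u - sent t u = {} then None else Some (Min (knows t u - sent t u)))"
definition items where "items = (\<Union>u\<in>{..<n}. own_item (lin u) (St L u))"

definition item_of :: "nat \<Rightarrow> nat" where
  "item_of i = enc_item N (vcode (last_mark (i - 1))) (i - last_mark (i - 1))
     (pre_wt i - pre_wt (last_mark (i - 1))) (vcode i) (if i = h then 1 else 0)"
definition path_items where "path_items = {item_of i | i. 0 < i \<and> i \<le> h \<and> (marked i \<or> i = h)}"

lemma own_item_P: "i \<le> h \<Longrightarrow> own_item (lin (P i)) (St L (P i)) =
   (if 0 < i \<and> (marked i \<or> i = h) \<and> i - last_mark (i - 1) \<le> L then {item_of i} else {})"
  using phase1_invariant[of L] P_eq_hd_iff[of i] P_eq_last_iff[of i] is_marker_P[of i]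
  by (auto simp: own_item_def received_at_def item_of_def vcode_def)

lemma own_item_off_path: "v < n \<Longrightarrow> v \<notin> set ps \<Longrightarrow> own_item (lin v) (St L v) = {}"
  using phase1_invariant[of L] off_path_input[of v] by (auto simp: own_item_def)

lemma items_subset: "items \<subseteq> path_items"
proof
  fix x assume "x \<in> items"
  then obtain u where u: "u < n" "x \<in> own_item (lin u) (St L u)" unfolding items_def by auto
  show "x \<in> path_items"
  proof (cases "u \<in> set ps")
    case True
    then obtain i where i: "i \<le> h" "u = P i" using in_path_iff by auto
    then show ?thesis using u own_item_P[OF i(1)] unfolding path_items_def by (auto split: if_splits)
  next
    case False then show ?thesis using u own_item_off_path by auto
  qed
qed

lemma finite_path_items: "finite path_items"
proof -
  have "path_items \<subseteq> item_of ` {..h}" unfolding path_items_def by auto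
  then show ?thesis using finite_subset by blast
qed

lemma finite_items: "finite items" using items_subset finite_path_items finite_subset by blast

lemma item_of_less: "0 < i \<Longrightarrow> i \<le> h \<Longrightarrow> item_of i < N ^ 5"
  unfolding item_of_def
  using vcode_less_base[of i] vcode_less_base[of "last_mark (i - 1)"] last_mark_le[of "i - 1"]
    pre_wt_less_base[of i] h_less_n base_large(2) n2
  by (intro enc_item_less) auto

lemma path_item_less: "x \<in> path_items \<Longrightarrow> x < max 2 n ^ msg_exp"
  unfolding path_items_def using item_of_less base_power_le[of 5] by (auto intro: less_le_trans)

lemma knows_eq: "knows t u = own_item (lin u) (St L u) \<union> fst (snd (St (L + t) u))"
  unfolding knows_def known_def using own_item_stable[of "L + t" u] by simp

lemma send_raw_phase2: "send_raw (lin u) (St (L + t) u) (L + t) j = msg t u"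
  unfolding send_raw_def msg_def pending_def knows_def sent_def by simp

lemma msg_in_knows: "finite (knows t u) \<Longrightarrow> msg t u = Some m \<Longrightarrow> m \<in> knows t u"
  using Min_in[of "knows t u - sent t u"] by (auto simp: msg_def split: if_splits)

lemma received_phase2:
  "fst (snd (St (L + Suc t) u)) = fst (snd (St (L + t) u)) \<union> {m. \<exists>j. inbox_at (L + t) u j = Some m}"
  using update_phase2(2)[of "lin u" "L + t"] by (simp add: St_Suc)

lemma knows_subset_items: "u < n \<Longrightarrow> knows t u \<subseteq> items"
proof (induction t arbitrary: u)
  case 0
  then show ?case unfolding knows_eq using phase1_invariant[of L] items_def by auto
next
  case (Suc t)
  have "m \<in> items" if inbox: "inbox_at (L + t) u j = Some m" for j m
  proof -
    obtain v where v: "v < n" "send (lin v) (St (L + t) v) (L + t) (ident u) = Some m"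
      using inbox_SomeD[OF inbox] by auto
    then have "msg t v = Some m" using send_raw_phase2 by (auto simp: send_def split: option.splits if_splits)
    moreover have "finite (knows t v)" using Suc.IH[OF v(1)] finite_items by (rule finite_subset)
    ultimately show ?thesis using msg_in_knows Suc.IH[OF v(1)] by blast
  qed
  moreover have "knows t u \<subseteq> items" using Suc by blast
  ultimately show ?case unfolding knows_eq received_phase2 by blast
qed

lemma sent_Suc: "sent (Suc t) u = sent t u \<union> set_option (msg t u)"
  using update_phase2(3)[of "lin u" "L + t"] by (simp add: St_Suc sent_def msg_def pending_def knows_def)

lemma knows_Suc:
  "u < n \<Longrightarrow> knows t u \<union> {x. \<exists>v\<in>{..<n}. adj w v u \<and> msg t v = Some x} \<subseteq> knows (Suc t) u"
proof -
  assume u: "u < n"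
  have "x \<in> knows (Suc t) u" if v: "v < n" "adj w v u" "msg t v = Some x" for v x
  proof -
    have "finite (knows t v)" using knows_subset_items[OF v(1)] finite_items by (rule finite_subset)
    then have "x \<in> knows t v" using msg_in_knows v(3) by blast
    then have "x \<in> path_items" using knows_subset_items items_subset v by blast
    then have "send (lin v) (St (L + t) v) (L + t) (ident u) = Some x"
      using path_item_less send_raw_phase2 v by (simp add: send_def)
    then have "inbox_at (L + t) u (ident v) = Some x" using inbox_from_nbr v by simp
    then show ?thesis unfolding knows_eq received_phase2 by auto
  qed
  then show ?thesis unfolding knows_eq received_phase2 by auto
qed

lemma pipelined_flooding_execution: "pipelined_flooding {..<n} (adj w) knows sent msg items"
  unfolding pipelined_flooding_def using finite_items knows_subset_items phase1_invariant[of L] sent_Suc knows_Suc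
  by (auto simp: sent_def msg_def)

interpretation F: pipelined_flooding "{..<n}" "adj w" knows sent msg items by (rule pipelined_flooding_execution)

lemma uwalk_reach:
  "is_uwalk w xs \<Longrightarrow> hd xs \<in> F.reach x 0 \<Longrightarrow> k < length xs \<Longrightarrow> xs ! k \<in> F.reach x k"
proof (induction k)
  case 0 then show ?case by (simp add: hd_conv_nth is_uwalk_def)
next
  case (Suc k)
  then have "adj w (xs ! k) (xs ! Suc k)" unfolding is_uwalk_def by auto
  then show ?case using Suc adj_lt by auto
qed

abbreviation D where "D \<equiv> diam n w"

lemma knows_all_items: "u < n \<Longrightarrow> items \<subseteq> knows (D + card items) u"
proof
  fix x assume u: "u < n" and x: "x \<in> items"
  then obtain v where v: "v < n" "x \<in> own_item (lin v) (St L v)" unfolding items_def by auto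
  then have "v \<in> F.reach x 0" using knows_eq by auto
  obtain xs where xs: "is_uwalk w xs" "hd xs = v" "last xs = u" "length xs = Suc (hop w v u)"
    using hop_attained connected[OF v(1) u] by blast
  then have "last xs = xs ! hop w v u" using last_conv_nth[of xs] by (auto simp: is_uwalk_def)
  then have "u \<in> F.reach x (hop w v u)"
    using uwalk_reach[OF xs(1), of x "hop w v u"] xs \<open>v \<in> F.reach x 0\<close> by simp
  then have "u \<in> F.reach x D" using F.reach_mono hop_le_diam[OF v(1) u] by blast
  then show "x \<in> knows (D + card items) u" using F.flooding_delivers x by blast
qed

subsection \<open>Reconstruction from the items\<close>

definition carries_item :: "nat \<Rightarrow> bool" where "carries_item i \<longleftrightarrow> 0 < i \<and> i \<le> h \<and> (marked i \<or> i = h)"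

lemma path_items_image: "path_items = item_of ` {i. carries_item i}" unfolding path_items_def carries_item_def by auto

lemma item_of_fields:
  assumes i: "0 < i" "i \<le> h"
  shows "item_prev N (item_of i) = vcode (last_mark (i - 1))"
    and "item_hops N (item_of i) = i - last_mark (i - 1)"
    and "item_wt N (item_of i) = pre_wt i - pre_wt (last_mark (i - 1))"
    and "item_id N (item_of i) = vcode i"
    and "item_last N (item_of i) = (if i = h then 1 else 0)"
proof -
  have "last_mark (i - 1) \<le> h" using last_mark_le[of "i - 1"] i by simp
  then have small: "vcode (last_mark (i - 1)) < N" "i - last_mark (i - 1) < N"
    "pre_wt i - pre_wt (last_mark (i - 1)) < N" "vcode i < N"
    using vcode_less_base i h_less_n base_large(2) pre_wt_less_base[OF i(2)] by auto
  note fields = item_fields[OF small, of "if i = h then 1 else 0", folded item_of_def]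
  show "item_prev N (item_of i) = vcode (last_mark (i - 1))" by (rule fields(1))
  show "item_hops N (item_of i) = i - last_mark (i - 1)" by (rule fields(2))
  show "item_wt N (item_of i) = pre_wt i - pre_wt (last_mark (i - 1))" by (rule fields(3))
  show "item_id N (item_of i) = vcode i" by (rule fields(4))
  show "item_last N (item_of i) = (if i = h then 1 else 0)" by (rule fields(5))
qed

lemma vcode_eq_iff: "j \<le> h \<Longrightarrow> j' \<le> h \<Longrightarrow> vcode j = vcode j' \<longleftrightarrow> j = j'"
proof -
  assume j: "j \<le> h" "j' \<le> h"
  have "ident (P j) = ident (P j') \<Longrightarrow> j = j'"
    using inj_ident P_less_n[OF j(1)] P_less_n[OF j(2)] P_eq_iff[OF j] unfolding inj_on_def by auto
  then show ?thesis unfolding vcode_def by auto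
qed

lemma vcode_eq_0_iff: "vcode j = 0 \<longleftrightarrow> j = 0" by (simp add: vcode_def)

lemma path_item_by_id:
  "y \<in> path_items \<Longrightarrow> 0 < j \<Longrightarrow> j \<le> h \<Longrightarrow> item_id N y = vcode j \<Longrightarrow>
   y = item_of j \<and> carries_item j"
proof -
  assume y: "y \<in> path_items" "0 < j" "j \<le> h" "item_id N y = vcode j"
  then obtain i where i: "carries_item i" "y = item_of i" using path_items_image by auto
  then have i0: "0 < i" "i \<le> h" unfolding carries_item_def by auto
  have "item_id N (item_of i) = vcode i" using item_of_fields(4)[OF i0] .
  then have "vcode i = vcode j" using i(2) y(4) by simp
  then have "i = j" using vcode_eq_iff[OF i0(2) y(3)] by simp
  then show ?thesis using i by simp
qed

lemma path_item_last: "y \<in> path_items \<Longrightarrow> item_last N y = 1 \<Longrightarrow> y = item_of h \<and> carries_item h"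
proof -
  assume y: "y \<in> path_items" "item_last N y = 1"
  then obtain i where i: "carries_item i" "y = item_of i" using path_items_image by auto
  then have i0: "0 < i" "i \<le> h" unfolding carries_item_def by auto
  have "item_last N (item_of i) = (if i = h then 1 else 0)" using item_of_fields(5)[OF i0] .
  moreover have "item_last N (item_of i) = 1" using i(2) y(2) by simp
  ultimately have "(if i = h then 1 else 0) = (1::nat)" by simp
  then have "i = h" by (cases "i = h") auto
  then show ?thesis using i by simp
qed

lemma last_mark_eqI:
  "marked j \<Longrightarrow> j \<le> i \<Longrightarrow> (\<forall>k. j < k \<and> k \<le> i \<longrightarrow> \<not> marked k) \<Longrightarrow> last_mark i = j"
proof (induction i)
  case 0 then show ?case by simp
next
  case (Suc i)
  show ?case
  proof (cases "j = Suc i")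
    case True then show ?thesis using Suc by simp
  next
    case False then show ?thesis using Suc by auto
  qed
qed

lemma next_carrier:
  assumes "carries_item i" "i < h"
  obtains i' where "i < i'" "carries_item i'" "last_mark (i' - 1) = i"
proof -
  have i: "marked i" "0 < i" using assms unfolding carries_item_def by auto
  have h: "carries_item h" using assms unfolding carries_item_def by auto
  define i' where "i' = (LEAST k. i < k \<and> carries_item k)"
  have i': "i < i'" "carries_item i'"
    using LeastI[of "\<lambda>k. i < k \<and> carries_item k" h] assms(2) h unfolding i'_def by auto
  have "\<not> marked k" if "i < k" "k \<le> i' - 1" for k
  proof -
    have "k < i'" using that i' by simp
    then have "\<not> carries_item k" using not_less_Least[of k "\<lambda>k. i < k \<and> carries_item k"] that
      unfolding i'_def by blast
    moreover have "k \<le> h" "k \<noteq> h" using that i' unfolding carries_item_def by auto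
    ultimately show ?thesis using that i unfolding carries_item_def by auto
  qed
  then have "last_mark (i' - 1) = i" using last_mark_eqI[OF i(1)] i' by auto
  then show ?thesis using that i' by blast
qed

text \<open>In a closed set of path items one can walk back from the item of \<open>t\<close> through the items
  of all markers, since the item of the next carrier after a marker points back to it.\<close>

lemma chain_closed_complete: "K \<subseteq> path_items \<Longrightarrow> chain_closed N K \<Longrightarrow> path_items \<subseteq> K"
proof -
  assume K: "K \<subseteq> path_items" "chain_closed N K"
  obtain y where y: "y \<in> K" "item_last N y = 1" using K(2) unfolding chain_closed_def by auto
  then have yh: "y = item_of h" "carries_item h" using path_item_last K(1) by auto
  have "carries_item i \<Longrightarrow> item_of i \<in> K" for i
  proof (induction "h - i" arbitrary: i rule: less_induct)
    case less
    show ?case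
    proof (cases "i = h")
      case True then show ?thesis using y yh by simp
    next
      case False
      then have i: "i < h" "0 < i" using less.prems carries_item_def by auto
      obtain i' where i': "i < i'" "carries_item i'" "last_mark (i' - 1) = i"
        using next_carrier[OF less.prems i(1)] .
      have "i' \<le> h" using i' carries_item_def by auto
      then have "item_of i' \<in> K" using less.hyps[of i'] i' by auto
      moreover have "item_prev N (item_of i') = vcode i"
        using item_of_fields(1)[of i'] i' \<open>i' \<le> h\<close> by auto
      moreover have "vcode i \<noteq> 0" using vcode_eq_0_iff i by simp
      ultimately obtain z where "z \<in> K" "item_id N z = vcode i"
        using K(2) unfolding chain_closed_def by force
      then show ?thesis using path_item_by_id[of z i] K(1) i \<open>i < h\<close> by auto
    qed
  qed
  then show ?thesis using path_items_image by auto
qed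

lemma chain_back_path_items:
  "marked j \<Longrightarrow> j \<le> h \<Longrightarrow> j \<le> f \<Longrightarrow> chain_back N path_items f (vcode j) = (j, pre_wt j)"
proof (induction j arbitrary: f rule: less_induct)
  case (less j)
  show ?case
  proof (cases "j = 0")
    case True then show ?thesis by (cases f) (auto simp: vcode_def pre_wt_def)
  next
    case False
    then obtain f' where f: "f = Suc f'" using less.prems by (cases f) auto
    have carries: "carries_item j" using less.prems False carries_item_def by auto
    have item_in: "item_of j \<in> path_items" using carries path_items_image by auto
    have sel: "(SOME y. y \<in> path_items \<and> item_id N y = vcode j) = item_of j"
    proof (rule some_equality)
      show "item_of j \<in> path_items \<and> item_id N (item_of j) = vcode j"
        using item_in item_of_fields(4)[of j] carries carries_item_def by auto
      show "y \<in> path_items \<and> item_id N y = vcode j \<Longrightarrow> y = item_of j" for y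
        using path_item_by_id[of y j] False less.prems by auto
    qed
    have jl: "last_mark (j - 1) < j" using last_mark_le[of "j - 1"] False by simp
    have ih: "chain_back N path_items f' (vcode (last_mark (j - 1))) = (last_mark (j - 1), pre_wt (last_mark (j - 1)))"
      using less.IH[OF jl] marked_last_mark[of "j - 1"] jl less.prems f by auto
    have pm: "pre_wt (last_mark (j - 1)) \<le> pre_wt j" using pre_wt_mono jl by simp
    show ?thesis using f False sel ih item_of_fields[of j] carries carries_item_def jl pm vcode_eq_0_iff
      by (auto simp: Let_def)
  qed
qed

lemma chain_total_path_items: "0 < h \<Longrightarrow> h \<le> f \<Longrightarrow> chain_total N path_items f = (h, pre_wt h)"
proof -
  assume h: "0 < h" "h \<le> f"
  have carries_h: "carries_item h" using h carries_item_def by auto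
  have sel: "(SOME y. y \<in> path_items \<and> item_last N y = 1) = item_of h"
  proof (rule some_equality)
    show "item_of h \<in> path_items \<and> item_last N (item_of h) = 1" using carries_h path_items_image item_of_fields(5)[of h] h by auto
    show "y \<in> path_items \<and> item_last N y = 1 \<Longrightarrow> y = item_of h" for y using path_item_last by auto
  qed
  have jl: "last_mark (h - 1) < h" using last_mark_le[of "h - 1"] h by simp
  have ih: "chain_back N path_items f (vcode (last_mark (h - 1))) = (last_mark (h - 1), pre_wt (last_mark (h - 1)))"
    using chain_back_path_items[of "last_mark (h - 1)" f] marked_last_mark[of "h - 1"] jl h by auto
  have pm: "pre_wt (last_mark (h - 1)) \<le> pre_wt h" using pre_wt_mono jl by simp
  have e1: "last_mark (h - 1) + (h - last_mark (h - 1)) = h" using jl by simp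
  have e2: "pre_wt (last_mark (h - 1)) + (pre_wt h - pre_wt (last_mark (h - 1))) = pre_wt h" using pm by simp
  show ?thesis unfolding chain_total_def Let_def sel
    using ih item_of_fields(1,2,3)[OF h(1) order.refl] e1 e2 by simp
qed

lemma known_eq_knows: "L \<le> r \<Longrightarrow> known (lin v) (St r v) = knows (r - L) v"
  unfolding knows_def by simp

lemma counter_phase2: "i \<le> h \<Longrightarrow> L \<le> r \<Longrightarrow> counter (lin (P i)) (St r (P i)) = counter_at i L"
proof -
  assume i: "i \<le> h" and r: "L \<le> r"
  have "fst (St r (P i)) = received_at i L" using fst_St_stable[OF r] phase1_invariant[of L] i by simp
  then show ?thesis using counter_eq_counter_at[OF i] by simp
qed

lemma output_correct:
  assumes i: "i \<le> h" and o: "node_output (lin (P i)) (St r (P i)) r = Some x"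
  shows "x = (i, pre_wt i, pre_wt h - pre_wt i)"
proof (cases "h = 0")
  case True
  then have "i = 0" using i by simp
  then show ?thesis using o P_eq_hd_iff[OF i] P_eq_last_iff[OF i] True by (simp add: node_output_def pre_wt_def)
next
  case False
  have hp: "\<not> (P i \<noteq> hd ps \<and> \<not> has_pred (lin (P i)))" using P_eq_hd_iff[OF i] has_pred_P[OF i] by auto
  have st: "\<not> (P i = hd ps \<and> P i = last ps)" using P_eq_hd_iff[OF i] P_eq_last_iff[OF i] False by auto
  have c: "L \<le> r" "chain_closed N (known (lin (P i)) (St r (P i)))" "counter (lin (P i)) (St r (P i)) \<noteq> None"
    using o hp st unfolding node_output_def by (auto split: if_splits)
  have Ksub: "known (lin (P i)) (St r (P i)) \<subseteq> path_items"
    using known_eq_knows[OF c(1)] knows_subset_items P_less_n[OF i] items_subset by blast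
  have KT: "known (lin (P i)) (St r (P i)) = path_items" using chain_closed_complete[OF Ksub c(2)] Ksub by auto
  have cu: "counter (lin (P i)) (St r (P i)) = Some (vcode (last_mark i), i - last_mark i, pre_wt i - pre_wt (last_mark i))"
    using counter_phase2[OF i c(1)] c(3) by (auto simp: counter_at_def split: if_splits)
  have ji: "last_mark i \<le> i" by (rule last_mark_le)
  have pre: "chain_back N path_items n (vcode (last_mark i)) = (last_mark i, pre_wt (last_mark i))"
    using chain_back_path_items[of "last_mark i" n] marked_last_mark ji i h_less_n by auto
  have tot: "chain_total N path_items n = (h, pre_wt h)" using chain_total_path_items False h_less_n by auto
  have pm: "pre_wt (last_mark i) \<le> pre_wt i" using pre_wt_mono ji .
  have "node_output (lin (P i)) (St r (P i)) r = (case counter (lin (P i)) (St r (P i)) of Some (a, b, d) \<Rightarrow>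
          (let N = base n; K = known (lin (P i)) (St r (P i)); p = chain_back N K n a; tt = chain_total N K n in
           Some (fst p + b, snd p + d, snd tt - (snd p + d))))"
    using hp st c unfolding node_output_def local_in_simps by (simp only: if_False if_True simp_thms)
  also have "\<dots> = Some (last_mark i + (i - last_mark i), pre_wt (last_mark i) + (pre_wt i - pre_wt (last_mark i)),
      pre_wt h - (pre_wt (last_mark i) + (pre_wt i - pre_wt (last_mark i))))"
    unfolding cu KT Let_def using pre tot by simp
  finally show ?thesis using o ji pm by simp
qed

text \<open>No stretch of \<open>L\<close> consecutive path vertices after \<open>s\<close> lacks a marker, so every
  counter reaches the next marker or \<open>t\<close> within phase 1.\<close>

definition gaps_short :: bool where
  "gaps_short \<longleftrightarrow> (\<forall>i. 0 < i \<and> i \<le> h \<longrightarrow> i - last_mark (i - 1) \<le> L)"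

lemma items_eq_path_items: "gaps_short \<Longrightarrow> items = path_items"
proof
  assume g: gaps_short
  show "items \<subseteq> path_items" by (rule items_subset)
  show "path_items \<subseteq> items"
  proof
    fix x assume "x \<in> path_items"
    then obtain i where i: "carries_item i" "x = item_of i" using path_items_image by auto
    then have "own_item (lin (P i)) (St L (P i)) = {item_of i}" using own_item_P[of i] g carries_item_def gaps_short_def by auto
    then show "x \<in> items" unfolding items_def using i P_less_n carries_item_def by auto
  qed
qed

lemma chain_closed_path_items: "0 < h \<Longrightarrow> chain_closed N path_items"
proof -
  assume h: "0 < h"
  have carries_h: "carries_item h" using h by (simp add: carries_item_def)
  have "item_last N (item_of h) = 1" using item_of_fields(5)[OF h order.refl] by simp
  moreover have "item_of h \<in> path_items" using carries_h path_items_image by blast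
  ultimately have a: "\<exists>y\<in>path_items. item_last N y = 1" by blast
  have "item_prev N y = 0 \<or> (\<exists>z\<in>path_items. item_id N z = item_prev N y)" if y: "y \<in> path_items" for y
  proof -
    obtain i where i: "carries_item i" "y = item_of i" using y path_items_image by auto
    then have i0: "0 < i" "i \<le> h" unfolding carries_item_def by auto
    have fa: "item_prev N y = vcode (last_mark (i - 1))" using item_of_fields(1)[OF i0] i(2) by simp
    show ?thesis
    proof (cases "last_mark (i - 1) = 0")
      case True then show ?thesis using fa by (simp add: vcode_def)
    next
      case False
      have j0: "0 < last_mark (i - 1)" "last_mark (i - 1) \<le> h" using False last_mark_le[of "i - 1"] i0 by auto
      have "carries_item (last_mark (i - 1))" using j0 marked_last_mark[of "i - 1"] unfolding carries_item_def by blast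
      then have "item_of (last_mark (i - 1)) \<in> path_items" using path_items_image by blast
      moreover have "item_id N (item_of (last_mark (i - 1))) = item_prev N y" using item_of_fields(4)[OF j0] fa by simp
      ultimately show ?thesis by blast
    qed
  qed
  then show ?thesis using a unfolding chain_closed_def by auto
qed

lemma output_defined:
  assumes g: gaps_short and i: "i \<le> h" and r: "L + D + card items \<le> r"
  shows "node_output (lin (P i)) (St r (P i)) r \<noteq> None"
proof (cases "h = 0")
  case True
  then have "i = 0" using i by simp
  then show ?thesis using P_eq_hd_iff[OF i] P_eq_last_iff[OF i] True by (simp add: node_output_def)
next
  case False
  have Lr: "L \<le> r" using r by simp
  have "known (lin (P i)) (St r (P i)) = knows (r - L) (P i)" using known_eq_knows[OF Lr] .
  also have "\<dots> = items"
  proof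
    show "knows (r - L) (P i) \<subseteq> items" using knows_subset_items P_less_n[OF i] by auto
    have "D + card items \<le> r - L" using r by simp
    then show "items \<subseteq> knows (r - L) (P i)"
      using knows_all_items[OF P_less_n[OF i]] F.knows_mono[of "D + card items" "r - L" "P i"]
        P_less_n[OF i] by auto
  qed
  finally have K: "known (lin (P i)) (St r (P i)) = path_items" using items_eq_path_items[OF g] by simp
  have "i - last_mark i \<le> L"
  proof (cases "marked i \<or> i = 0")
    case True then show ?thesis
      by (cases i) auto
  next
    case False
    then have "last_mark i = last_mark (i - 1)" by (cases i) auto
    then show ?thesis using g False i gaps_short_def by auto
  qed
  then have cu: "counter (lin (P i)) (St r (P i)) \<noteq> None" using counter_phase2[OF i Lr] by (simp add: counter_at_def)
  have hp: "\<not> (P i \<noteq> hd ps \<and> \<not> has_pred (lin (P i)))" using P_eq_hd_iff[OF i] has_pred_P[OF i] by auto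
  have st: "\<not> (P i = hd ps \<and> P i = last ps)" using P_eq_hd_iff[OF i] P_eq_last_iff[OF i] False by auto
  show ?thesis using hp st Lr K chain_closed_path_items[of] False cu unfolding node_output_def
    by (auto split: option.splits simp: Let_def)
qed


lemma walk_weight_take_path: "i \<le> h \<Longrightarrow> walk_weight w (take (Suc i) ps) = pre_wt i"
  unfolding walk_weight_def pre_wt_def edge_wt_def using length_path by simp

lemma pre_wt_add: "pre_wt (i + m) = pre_wt i + (\<Sum>k<m. edge_wt (i + k))"
  by (induction m) (auto simp: pre_wt_Suc)

lemma walk_weight_drop_path: "i \<le> h \<Longrightarrow> walk_weight w (drop i ps) = pre_wt h - pre_wt i"
  unfolding walk_weight_def edge_wt_def using pre_wt_add[of i "h - i"] length_path
  by (simp add: edge_wt_def)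

lemma dist_source_P: "i \<le> h \<Longrightarrow> dist w (hd ps) (P i) = pre_wt i"
  using shortest_walk_split_dist(1)[OF path_walk path_shortest] length_path walk_weight_take_path
  by simp

lemma dist_P_target: "i \<le> h \<Longrightarrow> dist w (P i) (last ps) = pre_wt h - pre_wt i"
  using shortest_walk_split_dist(2)[OF path_walk path_shortest] length_path walk_weight_drop_path
  by simp

lemma out_at_eq: "out_at path_alg n w ident ps \<rho> r v = node_output (lin v) (St r v) r"
  unfolding out_at_def St_def by (simp add: hs_length)

lemma last_mark_ge: "marked p \<Longrightarrow> p \<le> i \<Longrightarrow> p \<le> last_mark i"
proof (induction i)
  case 0 then show ?case by simp
next
  case (Suc i) then show ?case by (cases "p = Suc i") auto
qed

lemma succeeds_if_gaps_short: "gaps_short \<Longrightarrow> L + D + card items \<le> T \<Longrightarrow> succeeds path_alg n w ident ps \<rho> T"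
proof -
  assume g: gaps_short and T: "L + D + card items \<le> T"
  define R0 where "R0 = L + D + card items"
  have A: "\<exists>r\<le>T. out_at path_alg n w ident ps \<rho> r v \<noteq> None" if v: "v < n" for v
  proof (cases "v \<in> set ps")
    case True
    then obtain i where i: "i \<le> h" "v = P i" using in_path_iff by auto
    then show ?thesis using output_defined[OF g i(1), of R0] T R0_def out_at_eq by auto
  next
    case False
    then have "node_output (lin v) (St 0 v) 0 \<noteq> None" using off_path_input[OF False] by (simp add: node_output_def)
    then show ?thesis using out_at_eq by (intro exI[of _ 0]) auto
  qed
  have B: "out_at path_alg n w ident ps \<rho> (LEAST r. out_at path_alg n w ident ps \<rho> r (P i) \<noteq> None) (P i)
        = Some (i, dist w (hd ps) (P i), dist w (P i) (last ps))" if i: "i < length ps" for i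
  proof -
    have ih: "i \<le> h" using i length_path by simp
    have ex: "out_at path_alg n w ident ps \<rho> R0 (P i) \<noteq> None" using output_defined[OF g ih, of R0] R0_def out_at_eq by simp
    define r where "r = (LEAST r. out_at path_alg n w ident ps \<rho> r (P i) \<noteq> None)"
    have "out_at path_alg n w ident ps \<rho> r (P i) \<noteq> None" unfolding r_def by (rule LeastI[of _ R0]) (rule ex)
    then obtain x where x: "node_output (lin (P i)) (St r (P i)) r = Some x" using out_at_eq by auto
    then have "x = (i, pre_wt i, pre_wt h - pre_wt i)" by (rule output_correct[OF ih])
    then show ?thesis using x r_def out_at_eq dist_source_P[OF ih] dist_P_target[OF ih] by simp
  qed
  show ?thesis unfolding succeeds_def using A B by blast
qed

lemma card_items_le: "card items \<le> card {p \<in> {1..<h}. \<rho> (P p) = replicate (mark_bits n) True} + 1"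
proof -
  have "card items \<le> card path_items" by (rule card_mono[OF finite_path_items items_subset])
  also have "\<dots> \<le> card {i. carries_item i}" unfolding path_items_image
  proof (rule card_image_le)
    show "finite {i. carries_item i}" by (rule finite_subset[of _ "{..h}"]) (auto simp: carries_item_def)
  qed
  also have "\<dots> \<le> card (insert h {p \<in> {1..<h}. \<rho> (P p) = replicate (mark_bits n) True})"
    by (rule card_mono) (auto simp: carries_item_def marked_def)
  also have "\<dots> \<le> card {p \<in> {1..<h}. \<rho> (P p) = replicate (mark_bits n) True} + 1"
    by (simp add: card_insert_if)
  finally show ?thesis .
qed

lemma succeeds_if_good:
  assumes g: "\<And>i. i \<le> h \<Longrightarrow> L < i \<Longrightarrow> \<exists>p\<in>{i - L..<i}. \<rho> (P p) = replicate (mark_bits n) True"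
    and T: "L + diam n w + (card {p \<in> {1..<h}. \<rho> (P p) = replicate (mark_bits n) True} + 1) \<le> T"
  shows "succeeds path_alg n w ident ps \<rho> T"
proof (rule succeeds_if_gaps_short)
  show gaps_short unfolding gaps_short_def
  proof (intro allI impI)
    fix i assume i: "0 < i \<and> i \<le> h"
    show "i - last_mark (i - 1) \<le> L"
    proof (rule ccontr)
      assume "\<not> i - last_mark (i - 1) \<le> L"
      then have c: "L < i" "last_mark (i - 1) < i - L" by auto
      then obtain p where p: "p \<in> {i - L..<i}" "\<rho> (P p) = replicate (mark_bits n) True" using g[of i] i by blast
      then have "marked p" unfolding marked_def by simp
      then have "p \<le> last_mark (i - 1)" using last_mark_ge[of p "i - 1"] p by auto
      then show False using c p by auto
    qed
  qed
  show "L + D + card items \<le> T" using T card_items_le by simp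
qed

end

section \<open>Parameter estimates\<close>

lemma floorlog_bounds_ge2:
  "2 \<le> n \<Longrightarrow> 2 ^ (floorlog 2 n - 1) \<le> n \<and> n < 2 ^ floorlog 2 n \<and> 2 \<le> floorlog 2 n"
proof -
  assume n: "2 \<le> n"
  have b: "2 ^ (floorlog 2 n - 1) \<le> n \<and> n < 2 ^ floorlog 2 n" using floorlog_bounds[of n 2] n by simp
  have "\<not> floorlog 2 n \<le> 1"
  proof
    assume "floorlog 2 n \<le> 1"
    then have "(2::nat) ^ floorlog 2 n \<le> 2 ^ 1" by (intro power_increasing) auto
    then show False using b n by simp
  qed
  then show ?thesis using b by simp
qed

lemma floorlog_le_log: "2 \<le> n \<Longrightarrow> real (floorlog 2 n) \<le> log 2 (real n) + 1 \<and> 1 \<le> log 2 (real n)"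
proof -
  assume n: "2 \<le> n"
  have "real (floorlog 2 n - 1) \<le> log 2 (real n)"
    using le_log_of_power[of 2 "floorlog 2 n - 1" "real n"] floorlog_bounds_ge2[OF n] by simp
  moreover have "real (floorlog 2 n - 1) = real (floorlog 2 n) - 1" using floorlog_bounds_ge2[OF n] by simp
  ultimately show ?thesis using n by simp
qed

lemma half_power_floorlog_le: "2 \<le> n \<Longrightarrow> (1 / 2) ^ (k * floorlog 2 n) \<le> 1 / real n ^ k"
proof -
  assume n: "2 \<le> n"
  have "real n \<le> 2 ^ floorlog 2 n"
    using floorlog_bounds_ge2[OF n] by (metis less_imp_le of_nat_le_iff of_nat_numeral of_nat_power)
  then have "real n ^ k \<le> (2 ^ floorlog 2 n) ^ k" by (intro power_mono) auto
  then have "1 / (2 ^ floorlog 2 n) ^ k \<le> 1 / real n ^ k" using n by (intro divide_left_mono) auto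
  moreover have "(2::real) ^ (k * floorlog 2 n) = (2 ^ floorlog 2 n) ^ k"
    by (metis power_mult mult.commute)
  ultimately show ?thesis by (simp add: power_one_over)
qed

lemma inverse_mult_power_le: "2 \<le> n \<Longrightarrow> 1 / (real n * real n ^ c) \<le> 1 / (2 * real n ^ c)"
  by (intro divide_left_mono mult_right_mono) auto

context alg_params
begin

lemma mark_bits_bounds:
  "2 \<le> n \<Longrightarrow> 2 ^ mark_bits n * 2 ^ mark_bits n \<le> n \<and> n < 4 * (2 ^ mark_bits n * 2 ^ mark_bits n)"
proof -
  assume n: "2 \<le> n"
  have sq: "2 ^ mark_bits n * 2 ^ mark_bits n = (2::nat) ^ (2 * mark_bits n)"
    by (simp add: power_add[symmetric] mult_2)
  have "(2::nat) ^ (2 * mark_bits n) \<le> 2 ^ (floorlog 2 n - 1)"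
    unfolding mark_bits_def by (intro power_increasing) auto
  moreover have "(2::nat) ^ floorlog 2 n \<le> 2 ^ (2 * mark_bits n + 2)"
    unfolding mark_bits_def by (intro power_increasing) auto
  moreover have "(2::nat) ^ (2 * mark_bits n + 2) = 4 * 2 ^ (2 * mark_bits n)"
    by (simp add: power_add)
  ultimately show ?thesis using floorlog_bounds_ge2[OF n] sq by linarith
qed

lemma mark_bits_sqrt:
  assumes n: "2 \<le> n"
  shows "real (2 ^ mark_bits n) \<le> sqrt (real n)" "real n / real (2 ^ mark_bits n) \<le> 2 * sqrt (real n)"
proof -
  define Q where "Q = real (2 ^ mark_bits n)"
  have Q_pos: "Q > 0" unfolding Q_def by simp
  have QQ: "Q * Q \<le> real n" "real n < 4 * (Q * Q)"
    using mark_bits_bounds[OF n] unfolding Q_def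
    by (metis of_nat_le_iff of_nat_less_iff of_nat_mult of_nat_numeral of_nat_power)+
  show "Q \<le> sqrt (real n)" using QQ(1) by (intro real_le_rsqrt) (simp add: power2_eq_square)
  have "sqrt (real n) \<le> sqrt (4 * (Q * Q))" using QQ(2) by simp
  also have "\<dots> = 2 * Q" using Q_pos by (simp add: real_sqrt_mult)
  finally have "sqrt (real n) \<le> 2 * Q" .
  then have "sqrt (real n) * (sqrt (real n) / Q) \<le> sqrt (real n) * 2"
    using Q_pos by (intro mult_left_mono) (auto simp: field_simps)
  then show "real n / Q \<le> 2 * sqrt (real n)" by (simp add: mult.commute)
qed

text \<open>If every path vertex is a marker independently with probability \<open>1 / 2 ^ mark_bits n\<close>,
  this bounds the probability that one of the at most \<open>n\<close> windows of \<open>phase1_len n\<close>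
  consecutive path vertices contains no marker.\<close>

lemma long_gap_bound:
  assumes n: "2 \<le> n"
  shows "real n * (1 - 1 / real (2 ^ mark_bits n)) ^ phase1_len n \<le> 1 / (2 * real n ^ c)"
proof -
  define Q where "Q = (2::nat) ^ mark_bits n"
  have "phase1_len n = Q * ((c + 2) * floorlog 2 n)" unfolding phase1_len_def Q_def by simp
  then have "(1 - 1 / real Q) ^ phase1_len n = ((1 - 1 / real Q) ^ Q) ^ ((c + 2) * floorlog 2 n)"
    by (simp add: power_mult)
  also have "\<dots> \<le> (1 / 2) ^ ((c + 2) * floorlog 2 n)"
    using one_minus_inverse_power_le[of Q] by (intro power_mono) (auto simp: Q_def field_simps)
  also have "\<dots> \<le> 1 / real n ^ (c + 2)" by (rule half_power_floorlog_le[OF n])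
  finally have "real n * (1 - 1 / real Q) ^ phase1_len n \<le> real n * (1 / real n ^ (c + 2))"
    by (intro mult_left_mono) auto
  also have "\<dots> = 1 / (real n * real n ^ c)" using n by (simp add: field_simps)
  also have "\<dots> \<le> 1 / (2 * real n ^ c)" by (rule inverse_mult_power_le[OF n])
  finally show ?thesis unfolding Q_def .
qed

text \<open>The expected number of markers is about \<open>\<surd>n\<close>. By a union bound over the
  \<open>marker_budget n\<close>-subsets of at most \<open>n\<close> path vertices, the bound below is the probability
  of exceeding that budget.\<close>

definition marker_budget :: "nat \<Rightarrow> nat" where
  "marker_budget n = 6 * (n div 2 ^ mark_bits n + 1) + (c + 1) * floorlog 2 n"

lemma many_markers_bound:
  assumes n: "2 \<le> n" and k: "k \<le> n"
  shows "real (k choose marker_budget n) / real (2 ^ mark_bits n) ^ marker_budget n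
    \<le> 1 / (2 * real n ^ c)"
proof -
  define m where "m = marker_budget n"
  define Q where "Q = (2::nat) ^ mark_bits n"
  have Q_pos: "Q > 0" unfolding Q_def by simp
  have m_pos: "m > 0" unfolding m_def marker_budget_def by simp
  have "n < (n div Q + 1) * Q"
    using Q_pos by (metis div_mult_mod_eq add_mult_distrib mod_less_divisor nat_add_left_cancel_less mult_1)
  then have "6 * n \<le> m * Q" unfolding m_def marker_budget_def Q_def[symmetric] by (simp add: add_mult_distrib)
  then have "6 * real n \<le> real m * real Q" by (metis of_nat_le_iff of_nat_mult of_nat_numeral)
  then have ratio: "3 * real n / (real m * real Q) \<le> 1 / 2" using m_pos Q_pos by (simp add: field_simps)
  \<comment> \<open>\<open>k choose m \<le> k ^ m / m! \<le> (3 k / m) ^ m\<close>\<close>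
  have "(k choose m) * fact m \<le> n ^ m"
    using binomial_fact_pow[of k m] power_mono[OF k, of m] by linarith
  then have binom: "real (k choose m) * fact m \<le> real n ^ m"
    by (metis of_nat_fact of_nat_le_iff of_nat_mult of_nat_power)
  have "real (k choose m) * real m ^ m \<le> real (k choose m) * (3 ^ m * fact m)"
    using power_self_le_fact[of m] by (intro mult_left_mono) auto
  also have "\<dots> = 3 ^ m * (real (k choose m) * fact m)" by simp
  also have "\<dots> \<le> 3 ^ m * real n ^ m" using binom by (intro mult_left_mono) auto
  finally have "real (k choose m) * real m ^ m \<le> 3 ^ m * real n ^ m" .
  then have "real (k choose m) / real Q ^ m \<le> (3 * real n) ^ m / (real m * real Q) ^ m"
    using m_pos Q_pos by (simp add: power_mult_distrib field_simps)
  also have "\<dots> = (3 * real n / (real m * real Q)) ^ m" by (simp add: power_divide)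
  also have "\<dots> \<le> (1 / 2) ^ m" using ratio by (intro power_mono) auto
  also have "\<dots> \<le> (1 / 2) ^ ((c + 1) * floorlog 2 n)"
    unfolding m_def marker_budget_def by (intro power_decreasing) auto
  also have "\<dots> \<le> 1 / (real n * real n ^ c)" using half_power_floorlog_le[OF n, of "c + 1"] by simp
  also have "\<dots> \<le> 1 / (2 * real n ^ c)" by (rule inverse_mult_power_le[OF n])
  finally show ?thesis unfolding m_def Q_def by simp
qed

lemma phase1_len_le:
  assumes n: "2 \<le> n"
  shows "real (phase1_len n) \<le> (2 * real c + 4) * (sqrt (real n) * log 2 (real n))"
proof -
  have "real (phase1_len n) = real (2 ^ mark_bits n) * (real c + 2) * real (floorlog 2 n)"
    unfolding phase1_len_def by (simp add: algebra_simps)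
  also have "\<dots> \<le> sqrt (real n) * (real c + 2) * (2 * log 2 (real n))"
    using mark_bits_sqrt(1)[OF n] floorlog_le_log[OF n] by (intro mult_mono) auto
  finally show ?thesis by (simp add: algebra_simps)
qed

lemma marker_budget_le:
  assumes n: "2 \<le> n"
  shows "real (marker_budget n) \<le> (2 * real c + 20) * (sqrt (real n) * log 2 (real n))"
proof -
  define sq lg where "sq = sqrt (real n)" and "lg = log 2 (real n)"
  have lg1: "1 \<le> lg" and log_bound: "real (floorlog 2 n) \<le> 2 * lg"
    using floorlog_le_log[OF n] unfolding lg_def by auto
  have sq1: "1 \<le> sq" unfolding sq_def using n by simp
  have "real (n div 2 ^ mark_bits n) \<le> real n / real (2 ^ mark_bits n)" by (rule of_nat_div_le_of_nat)
  then have div_bound: "real (n div 2 ^ mark_bits n) \<le> 2 * sq" using mark_bits_sqrt(2)[OF n] sq_def by simp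
  have "real (marker_budget n) = 6 * (real (n div 2 ^ mark_bits n) + 1) + (real c + 1) * real (floorlog 2 n)"
    unfolding marker_budget_def by (simp add: algebra_simps)
  also have "\<dots> \<le> 6 * (2 * sq + sq) + (real c + 1) * (2 * lg)"
    using div_bound sq1 log_bound by (intro add_mono mult_left_mono) auto
  also have "\<dots> \<le> (2 * real c + 20) * (sq * lg)"
  proof -
    have "sq \<le> sq * lg" "lg \<le> sq * lg" using lg1 sq1 by simp_all
    moreover have "real c * lg \<le> real c * (sq * lg)" using \<open>lg \<le> sq * lg\<close> by (intro mult_left_mono) auto
    ultimately show ?thesis by (simp add: algebra_simps)
  qed
  finally show ?thesis unfolding sq_def lg_def .
qed

lemma rounds_bound:
  assumes n: "2 \<le> n"
  shows "phase1_len n + D + marker_budget n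
    \<le> nat \<lceil>real (4 * c + 24) * (sqrt (real n) + real D) * (log 2 (real n)) ^ 1\<rceil>"
proof -
  define sq lg where "sq = sqrt (real n)" and "lg = log 2 (real n)"
  have lg1: "1 \<le> lg" using floorlog_le_log[OF n] unfolding lg_def by auto
  have "real (phase1_len n + D + marker_budget n) \<le> (4 * real c + 24) * (sq * lg) + real D"
    using phase1_len_le[OF n] marker_budget_le[OF n] unfolding sq_def lg_def by (simp add: algebra_simps)
  also have "\<dots> \<le> real (4 * c + 24) * (sq + real D) * lg"
  proof -
    have "1 \<le> real (4 * c + 24) * lg" using mult_mono[of 1 "real (4 * c + 24)" 1 lg] lg1 by simp
    then have "real D \<le> real (4 * c + 24) * lg * real D" using mult_right_mono[of 1 _ "real D"] by simp
    then show ?thesis by (simp add: algebra_simps)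
  qed
  also have "\<dots> \<le> real (nat \<lceil>real (4 * c + 24) * (sq + real D) * lg ^ 1\<rceil>)"
    by (simp add: real_nat_ceiling_ge)
  finally show ?thesis unfolding sq_def lg_def by (simp only: of_nat_le_iff)
qed

end

section \<open>Success probability\<close>

lemma card_nth_image:
  "distinct ps \<Longrightarrow> set ps \<subseteq> {..<n} \<Longrightarrow> A \<subseteq> {..<length ps} \<Longrightarrow>
   card ((!) ps ` A) = card A \<and> (!) ps ` A \<subseteq> {..<n}"
  by (auto simp: card_image inj_on_nth subset_iff)

context alg_params
begin

definition long_gap_event :: "nat \<Rightarrow> nat list \<Rightarrow> (nat \<Rightarrow> bool list) set" where
  "long_gap_event n ps = (\<Union>i \<in> {i. i \<le> length ps - 1 \<and> phase1_len n < i}.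
     {\<rho> \<in> rand_space n (mark_bits n).
        \<forall>v \<in> (!) ps ` {i - phase1_len n..<i}. \<rho> v \<noteq> replicate (mark_bits n) True})"

definition many_markers_event :: "nat \<Rightarrow> nat list \<Rightarrow> (nat \<Rightarrow> bool list) set" where
  "many_markers_event n ps = (\<Union>S \<in> {S. S \<subseteq> {1..<length ps - 1} \<and> card S = marker_budget n}.
     {\<rho> \<in> rand_space n (mark_bits n). \<forall>v \<in> (!) ps ` S. \<rho> v = replicate (mark_bits n) True})"

lemma long_gap_event_prob:
  assumes n: "2 \<le> n" and ps: "distinct ps" "set ps \<subseteq> {..<n}"
  shows "card (long_gap_event n ps) / card (rand_space n (mark_bits n)) \<le> 1 / (2 * real n ^ c)"
proof (cases "\<exists>i. i \<le> length ps - 1 \<and> phase1_len n < i")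
  case False
  then have "long_gap_event n ps = {}" unfolding long_gap_event_def by auto
  then show ?thesis by simp
next
  case True
  define q L where "q = mark_bits n" and "L = phase1_len n"
  define I1 where "I1 = {i. i \<le> length ps - 1 \<and> L < i}"
  have len: "length ps \<le> n" using length_le_if_distinct[OF ps] .
  have "L < n" using True len unfolding L_def by auto
  have window: "card {\<rho> \<in> rand_space n q. \<forall>v \<in> (!) ps ` {i - L..<i}. \<rho> v \<noteq> replicate q True}
      = (2 ^ q - 1) ^ L * (2 ^ q) ^ (n - L)" if "i \<in> I1" for i
  proof -
    have "{i - L..<i} \<subseteq> {..<length ps}" using that unfolding I1_def by auto
    then have "card ((!) ps ` {i - L..<i}) = L \<and> (!) ps ` {i - L..<i} \<subseteq> {..<n}"
      using card_nth_image[OF ps] that unfolding I1_def by auto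
    then show ?thesis
      using card_rand_space_where[of "(!) ps ` {i - L..<i}" n q "\<lambda>xs. xs \<noteq> replicate q True"]
        card_not_replicate_True[of q] by simp
  qed
  have "card (long_gap_event n ps) \<le>
      (\<Sum>i\<in>I1. card {\<rho> \<in> rand_space n q. \<forall>v \<in> (!) ps ` {i - L..<i}. \<rho> v \<noteq> replicate q True})"
    unfolding long_gap_event_def q_def[symmetric] L_def[symmetric] I1_def[symmetric]
    by (rule card_UN_le) (auto simp: I1_def)
  also have "\<dots> = card I1 * ((2 ^ q - 1) ^ L * (2 ^ q) ^ (n - L))" using window by simp
  also have "\<dots> \<le> n * ((2 ^ q - 1) ^ L * (2 ^ q) ^ (n - L))"
  proof -
    have "I1 \<subseteq> {..<n}" using len unfolding I1_def by auto
    then have "card I1 \<le> n" using card_mono[OF finite_lessThan] by fastforce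
    then show ?thesis by (rule mult_right_mono) simp
  qed
  finally have "real (card (long_gap_event n ps)) \<le> real (n * ((2 ^ q - 1) ^ L * (2 ^ q) ^ (n - L)))"
    by (simp only: of_nat_le_iff)
  also have "\<dots> = real n * ((2 ^ q - 1) ^ L * (2 ^ q) ^ (n - L))"
    by (simp add: of_nat_diff)
  finally have "card (long_gap_event n ps) / card (rand_space n q)
      \<le> real n * ((2 ^ q - 1) ^ L * (2 ^ q) ^ (n - L)) / card (rand_space n q)"
    by (rule divide_right_mono) simp
  also have "\<dots> = real n * ((2 ^ q - 1) ^ L * (2 ^ q) ^ (n - L)) / ((2 ^ q) ^ L * (2 ^ q) ^ (n - L))"
    using card_rand_space[of n q] \<open>L < n\<close> by (simp flip: power_add)
  also have "\<dots> = real n * ((2 ^ q - 1) / 2 ^ q) ^ L"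
    by (simp add: power_divide)
  also have "\<dots> = real n * (1 - 1 / 2 ^ q) ^ L"
    by (simp add: diff_divide_distrib)
  also have "\<dots> \<le> 1 / (2 * real n ^ c)" using long_gap_bound[OF n] unfolding q_def L_def by simp
  finally show ?thesis unfolding q_def .
qed

lemma many_markers_event_prob:
  assumes n: "2 \<le> n" and ps: "distinct ps" "set ps \<subseteq> {..<n}"
  shows "card (many_markers_event n ps) / card (rand_space n (mark_bits n)) \<le> 1 / (2 * real n ^ c)"
proof -
  define q m where "q = mark_bits n" and "m = marker_budget n"
  define I2 where "I2 = {S. S \<subseteq> {1..<length ps - 1} \<and> card S = m}"
  have each: "card {\<rho> \<in> rand_space n q. \<forall>v \<in> (!) ps ` S. \<rho> v = replicate q True} = (2 ^ q) ^ (n - m)"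
    if "S \<in> I2" for S
  proof -
    have "S \<subseteq> {..<length ps}" using that unfolding I2_def by (force simp: subset_iff)
    then have "card ((!) ps ` S) = m \<and> (!) ps ` S \<subseteq> {..<n}"
      using card_nth_image[OF ps] that unfolding I2_def by auto
    moreover have "{xs. length xs = q \<and> xs = replicate q True} = {replicate q True}" by auto
    ultimately show ?thesis
      using card_rand_space_where[of "(!) ps ` S" n q "\<lambda>xs. xs = replicate q True"] by simp
  qed
  have "card (many_markers_event n ps) \<le>
      (\<Sum>S\<in>I2. card {\<rho> \<in> rand_space n q. \<forall>v \<in> (!) ps ` S. \<rho> v = replicate q True})"
    unfolding many_markers_event_def q_def[symmetric] m_def[symmetric] I2_def[symmetric]
    by (rule card_UN_le) (auto simp: I2_def)
  also have "\<dots> = ((length ps - 2) choose m) * (2 ^ q) ^ (n - m)"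
    using each n_subsets[of "{1..<length ps - 1}" m] unfolding I2_def by (simp add: numeral_2_eq_2)
  finally have card_le: "card (many_markers_event n ps) \<le> ((length ps - 2) choose m) * (2 ^ q) ^ (n - m)" .
  show ?thesis
  proof (cases "m \<le> n")
    case False
    then have zero: "(length ps - 2) choose m = 0" using length_le_if_distinct[OF ps] by simp
    show ?thesis using card_le[unfolded zero] by simp
  next
    case True
    have "real (card (many_markers_event n ps)) \<le> real (((length ps - 2) choose m) * (2 ^ q) ^ (n - m))"
      using card_le by (simp only: of_nat_le_iff)
    also have "\<dots> = real ((length ps - 2) choose m) * (2 ^ q) ^ (n - m)"
      by simp
    finally have "card (many_markers_event n ps) / card (rand_space n q)
        \<le> real ((length ps - 2) choose m) * (2 ^ q) ^ (n - m) / card (rand_space n q)"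
      by (rule divide_right_mono) simp
    also have "\<dots> = real ((length ps - 2) choose m) * (2 ^ q) ^ (n - m) / ((2 ^ q) ^ m * (2 ^ q) ^ (n - m))"
      using card_rand_space[of n q] True by (simp flip: power_add)
    also have "\<dots> = real ((length ps - 2) choose m) / real (2 ^ q) ^ m"
      by simp
    also have "\<dots> \<le> 1 / (2 * real n ^ c)"
      using many_markers_bound[OF n, of "length ps - 2"] length_le_if_distinct[OF ps]
      unfolding q_def m_def by simp
    finally show ?thesis unfolding q_def .
  qed
qed

lemma succeeds_outside_events:
  assumes n: "2 \<le> n" and valid: "valid_instance n W I w ident ps"
    and \<rho>: "\<rho> \<in> rand_space n (mark_bits n) - (long_gap_event n ps \<union> many_markers_event n ps)"
    and T: "phase1_len n + diam n w + marker_budget n \<le> T"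
  shows "succeeds path_alg n w ident ps \<rho> T"
proof -
  interpret execution c W I n w ident ps \<rho> using n valid by unfold_locales
  define markers where "markers = {p \<in> {1..<h}. \<rho> (P p) = replicate (mark_bits n) True}"
  have "card markers < marker_budget n"
  proof (rule ccontr)
    assume "\<not> ?thesis"
    then obtain S where S: "S \<subseteq> markers" "card S = marker_budget n"
      using obtain_subset_with_card_n by (metis not_less)
    then have "S \<subseteq> {1..<length ps - 1}" "\<forall>v \<in> (!) ps ` S. \<rho> v = replicate (mark_bits n) True"
      unfolding markers_def by auto
    then have "\<rho> \<in> many_markers_event n ps"
      using \<rho> S(2) unfolding many_markers_event_def by auto
    then show False using \<rho> by simp
  qed
  moreover have "\<exists>p\<in>{i - L..<i}. \<rho> (P p) = replicate (mark_bits n) True" if "i \<le> h" "L < i" for i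
    using \<rho> that unfolding long_gap_event_def by auto
  ultimately show ?thesis using T by (intro succeeds_if_good) (auto simp: markers_def)
qed

lemma success_prob_ge:
  assumes n: "2 \<le> n" and valid: "valid_instance n W I w ident ps"
  defines "T \<equiv> nat \<lceil>real (4 * c + 24) * (sqrt (real n) + real (diam n w)) * (log 2 (real n)) ^ 1\<rceil>"
  shows "1 - 1 / real n ^ c \<le> success_prob path_alg n w ident ps T"
proof -
  have ps: "distinct ps" "set ps \<subseteq> {..<n}" using valid unfolding valid_instance_def by auto
  have good: "rand_space n (mark_bits n) - (long_gap_event n ps \<union> many_markers_event n ps)
      \<subseteq> {\<rho> \<in> rand_space n (mark_bits n). succeeds path_alg n w ident ps \<rho> T}"
    using succeeds_outside_events[OF n valid] rounds_bound[OF n, of "diam n w"] unfolding T_def by auto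
  have events: "{\<rho> \<in> rand_space n (mark_bits n). succeeds path_alg n w ident ps \<rho> T}
      \<union> long_gap_event n ps \<union> many_markers_event n ps \<subseteq> rand_space n (mark_bits n)"
    unfolding long_gap_event_def many_markers_event_def by blast
  have "rand_space n (mark_bits n) \<noteq> {}"
    using card_rand_space[of n "mark_bits n"] by force
  from card_ge_union_bound[OF finite_rand_space this good events
      long_gap_event_prob[OF n ps] many_markers_event_prob[OF n ps]]
  have "1 - 1 / (2 * real n ^ c) - 1 / (2 * real n ^ c) \<le> success_prob path_alg n w ident ps T"
    unfolding success_prob_def al_rbits_path_alg .
  then show ?thesis by simp
qed

end

theorem lemma2p5:
  shows "\<forall>(c::nat) (W::nat) (I::nat). \<exists>(A::algorithm) (B::nat) (C::real) (k::nat) (n0::nat).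
     congest_bounded A B \<and>
     (\<forall>n w ident ps. n \<ge> n0 \<and> valid_instance n W I w ident ps \<longrightarrow>
        success_prob A n w ident ps
          (nat \<lceil>C * (sqrt (real n) + real (diam n w)) * (log 2 (real n)) ^ k\<rceil>)
        \<ge> 1 - 1 / real n ^ c)"
proof (intro allI)
  fix c W I :: nat
  interpret alg_params c W I .
  show "\<exists>(A::algorithm) (B::nat) (C::real) (k::nat) (n0::nat).
     congest_bounded A B \<and>
     (\<forall>n w ident ps. n \<ge> n0 \<and> valid_instance n W I w ident ps \<longrightarrow>
        success_prob A n w ident ps
          (nat \<lceil>C * (sqrt (real n) + real (diam n w)) * (log 2 (real n)) ^ k\<rceil>)
        \<ge> 1 - 1 / real n ^ c)"
    using congest_bounded_path_alg success_prob_ge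
    by (intro exI[of _ path_alg] exI[of _ msg_exp] exI[of _ "real (4 * c + 24)"] exI[of _ 1] exI[of _ 2])
      auto
qed

end
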